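(* Let $n \ge 1$ and $w \in S_n$. The Schubert polynomial $\mathfrak{S}_w$ is a single complete homogeneous monomial, i.e. $\mathfrak{S}_w = h_{\vec a}$ for some sequence $\vec a$, if and only if $w$ avoids the patterns $321$ and $231$.
   Context: For $i \ge 1$ and $j \ge 0$, $h^i_j$ denotes the complete homogeneous symmetric polynomial of degree $j$ in the variables $x_1,\dots,x_i$ (so $h^i_0 = 1$). A complete homogeneous monomial (CHM) is a product $h_{\vec a} = h^1_{a_1} h^2_{a_2}\cdots$ where $\vec a = (a_1,a_2,\dots)$ is a sequence of nonnegative integers, only finitely many nonzero. Schubert polynomials $\mathfrak{S}_w$, $w \in S_n$, are defined by $\mathfrak{S}_{w_0} = x_1^{n-1}x_2^{n-2}\cdots x_{n-1}$ for the longest element $w_0$, and $\partial_i \mathfrak{S}_w = \mathfrak{S}_{ws_i}$ if $\ell(ws_i) = \ell(w)-1$, $\partial_i\mathfrak{S}_w = 0$ otherwise, where $\partial_i f = (f - s_i f)/(x_i - x_{i+1})$ and $s_i$ swaps $x_i, x_{i+1}$. A permutation $w$ contains a pattern $p \in S_k$ if there are indices $i_1 < \dots < i_k$ such that $w(i_1),\dots,w(i_k)$ are in the same relative order as $p(1),\dots,p(k)$; otherwise $w$ avoids $p$. *)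

theory Defs
  imports "HOL-Library.Poly_Mapping" "HOL-Combinatorics.Permutations" "HOL-Combinatorics.Transposition"
begin

text \<open>Polynomials in the variables x_1, x_2, ... with integer coefficients:
  a monomial is a finitely supported exponent vector, where
  the key i stands for the variable x_i (we use i \<ge> 1, index 0 is unused).\<close>

type_synonym mpoly = "(nat \<Rightarrow>\<^sub>0 nat) \<Rightarrow>\<^sub>0 int"

definition var :: "nat \<Rightarrow> mpoly" where
  "var i = Poly_Mapping.single (Poly_Mapping.single i 1) 1"

definition swap_mon :: "nat \<Rightarrow> (nat \<Rightarrow>\<^sub>0 nat) \<Rightarrow> (nat \<Rightarrow>\<^sub>0 nat)" where
  "swap_mon i m = Abs_poly_mapping (\<lambda>k. Poly_Mapping.lookup m (transpose i (Suc i) k))"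

definition swap_poly :: "nat \<Rightarrow> mpoly \<Rightarrow> mpoly" where
  "swap_poly i f = Abs_poly_mapping (\<lambda>m. Poly_Mapping.lookup f (swap_mon i m))"

definition divdiff :: "nat \<Rightarrow> mpoly \<Rightarrow> mpoly" where
  "divdiff i f = (THE g. f - swap_poly i f = (var i - var (Suc i)) * g)"

definition stransp :: "nat \<Rightarrow> nat \<Rightarrow> nat" where
  "stransp i = transpose i (Suc i)"

definition perm_length :: "nat \<Rightarrow> (nat \<Rightarrow> nat) \<Rightarrow> nat" where
  "perm_length n w = card {(i, j). i \<in> {1..n} \<and> j \<in> {1..n} \<and> i < j \<and> w i > w j}"

definition longest :: "nat \<Rightarrow> nat \<Rightarrow> nat" where
  "longest n = (\<lambda>i. if i \<in> {1..n} then n + 1 - i else i)"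

definition staircase :: "nat \<Rightarrow> mpoly" where
  "staircase n = (\<Prod>i\<in>{1..n}. var i ^ (n - i))"

text \<open>The Schubert polynomials of S_n, as specified in the paper:
  S_{w0} = x^delta and \<partial>_i S_w = S_{w s_i} whenever l(w s_i) = l(w) - 1.
  The relation below contains exactly the pairs (w, p) reachable from w0 this way;
  Schubert w is the (unique) such p.\<close>
inductive is_schubert :: "nat \<Rightarrow> (nat \<Rightarrow> nat) \<Rightarrow> mpoly \<Rightarrow> bool" for n where
  top: "is_schubert n (longest n) (staircase n)"
| step: "\<lbrakk> is_schubert n w p; 1 \<le> i; i < n;
           perm_length n (w \<circ> stransp i) + 1 = perm_length n w \<rbrakk>
         \<Longrightarrow> is_schubert n (w \<circ> stransp i) (divdiff i p)"

definition schubert :: "nat \<Rightarrow> (nat \<Rightarrow> nat) \<Rightarrow> mpoly" where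
  "schubert n w = (THE p. is_schubert n w p)"

definition hcomp :: "nat \<Rightarrow> nat \<Rightarrow> mpoly" where
  "hcomp i j = (\<Sum>m\<in>{m :: nat \<Rightarrow>\<^sub>0 nat. Poly_Mapping.keys m \<subseteq> {1..i} \<and> (\<Sum>k\<in>Poly_Mapping.keys m. Poly_Mapping.lookup m k) = j}.
                  Poly_Mapping.single m 1)"

text \<open>Complete homogeneous monomial h_a = h^1_{a_1} h^2_{a_2} ...; a finitely
  supported sequence (a_1, a_2, ...) is given as the list [a_1, ..., a_L].\<close>
definition chm :: "nat list \<Rightarrow> mpoly" where
  "chm a = (\<Prod>k<length a. hcomp (Suc k) (a ! k))"

definition contains_pattern :: "nat \<Rightarrow> (nat \<Rightarrow> nat) \<Rightarrow> nat list \<Rightarrow> bool" where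
  "contains_pattern n w p = (\<exists>idx :: nat \<Rightarrow> nat.
      (\<forall>a b. a < b \<and> b < length p \<longrightarrow> idx a < idx b) \<and>
      (\<forall>a < length p. idx a \<in> {1..n}) \<and>
      (\<forall>a < length p. \<forall>b < length p. (w (idx a) < w (idx b) \<longleftrightarrow> p ! a < p ! b)))"

end

theory Submission
  imports Defs
begin

text \<open>
  Divided differences satisfy the commutation and braid relations, so the Schubert polynomials
  are well defined, with \<open>\<partial>\<^sub>k S\<^sub>w = S\<^sub>w\<^sub>s\<^sub>k\<close> at a descent \<open>k\<close> of \<open>w\<close> and
  \<open>\<partial>\<^sub>k S\<^sub>w = 0\<close> at an ascent.

  If \<open>w\<close> avoids 321 and 231, its Lehmer code \<open>c\<close> vanishes at every ascent and right after
  every descent. Since \<open>\<partial>\<^sub>i h\<^sup>i\<^sub>d = h\<^sup>i\<^sup>+\<^sup>1\<^sub>d\<^sub>-\<^sub>1\<close>, the product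
  \<open>\<Prod>\<^sub>i h\<^sup>i\<^sub>c\<^sub>i\<close> then obeys the same recursion, and by induction on the length
  \<open>S\<^sub>w - \<Prod>\<^sub>i h\<^sup>i\<^sub>c\<^sub>i\<close> is killed by every \<open>\<partial>\<^sub>k\<close>. Being symmetric in
  \<open>x\<^sub>1, \<dots>, x\<^sub>n\<close> without involving \<open>x\<^sub>n\<close>, the difference is a constant, and both
  constant terms vanish.

  Conversely, every complete homogeneous monomial takes the value 1 at \<open>e\<^sub>1 = (1, 0, 0, \<dots>)\<close>,
  whereas telescoping along the divided differences shows that \<open>S\<^sub>w(e\<^sub>1)\<close> is 1 if \<open>w\<close>
  avoids 321 and 231 and 0 otherwise.
\<close>

abbreviation lookup :: "('a \<Rightarrow>\<^sub>0 'b::zero) \<Rightarrow> 'a \<Rightarrow> 'b" where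
  "lookup \<equiv> Poly_Mapping.lookup"

abbreviation keys :: "('a \<Rightarrow>\<^sub>0 'b::zero) \<Rightarrow> 'a set" where
  "keys \<equiv> Poly_Mapping.keys"

abbreviation monomial :: "(nat \<Rightarrow>\<^sub>0 nat) \<Rightarrow> mpoly" where
  "monomial b \<equiv> Poly_Mapping.single b 1"

lemma stransp_apply: "stransp i k = (if k = i then Suc i else if k = Suc i then i else k)"
  by (simp add: stransp_def transpose_def)

lemma stransp_simps [simp]:
  "stransp i i = Suc i"
  "stransp i (Suc i) = i"
  "k \<noteq> i \<Longrightarrow> k \<noteq> Suc i \<Longrightarrow> stransp i k = k"
  by (simp_all add: stransp_apply)

lemma stransp_stransp [simp]: "stransp i (stransp i k) = k"
  by (simp add: stransp_apply)

lemma inj_stransp: "inj (stransp i)"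
  by (metis injI stransp_stransp)

lemma stransp_commute:
  "j \<noteq> i \<Longrightarrow> j \<noteq> Suc i \<Longrightarrow> i \<noteq> Suc j \<Longrightarrow> stransp i (stransp j k) = stransp j (stransp i k)"
  by (simp add: stransp_apply)

lemma stransp_braid:
  "stransp i (stransp (Suc i) (stransp i k)) = stransp (Suc i) (stransp i (stransp (Suc i) k))"
  by (simp add: stransp_apply)

lemma stransp_eq_index_iff: "stransp i k = i \<longleftrightarrow> k = Suc i"
  by (simp add: stransp_apply)

lemma lookup_swap_mon [simp]: "lookup (swap_mon i m) k = lookup m (stransp i k)"
proof -
  have "finite (stransp i -` {k. lookup m k \<noteq> 0})"
    by (rule finite_vimageI[OF _ inj_stransp]) simp
  then show ?thesis
    unfolding swap_mon_def stransp_def[symmetric] by (subst lookup_Abs_poly_mapping) (auto simp: vimage_def)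
qed

lemma swap_mon_swap_mon [simp]: "swap_mon i (swap_mon i m) = m"
  by (rule poly_mapping_eqI) simp

lemma inj_swap_mon: "inj (swap_mon i)"
  by (metis injI swap_mon_swap_mon)

lemma swap_mon_add: "swap_mon i (a + b) = swap_mon i a + swap_mon i b"
  by (rule poly_mapping_eqI) (simp add: lookup_add)

lemma swap_mon_0 [simp]: "swap_mon i 0 = 0"
  by (rule poly_mapping_eqI) simp

lemma swap_mon_single: "swap_mon i (Poly_Mapping.single k c) = Poly_Mapping.single (stransp i k) c"
  by (rule poly_mapping_eqI) (simp add: lookup_single when_def, metis stransp_stransp)

lemma keys_swap_mon: "keys (swap_mon i m) = stransp i ` keys m"
proof -
  have "k \<in> keys (swap_mon i m) \<longleftrightarrow> k \<in> stransp i ` keys m" for k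
  proof
    assume "k \<in> keys (swap_mon i m)"
    then have "stransp i k \<in> keys m" by (simp add: in_keys_iff)
    then show "k \<in> stransp i ` keys m" by (metis image_eqI stransp_stransp)
  qed (auto simp: in_keys_iff)
  then show ?thesis by blast
qed

lemma lookup_swap_poly [simp]: "lookup (swap_poly i f) m = lookup f (swap_mon i m)"
proof -
  have "finite (swap_mon i -` {m. lookup f m \<noteq> 0})"
    by (rule finite_vimageI[OF _ inj_swap_mon]) simp
  then show ?thesis
    unfolding swap_poly_def by (subst lookup_Abs_poly_mapping) (auto simp: vimage_def)
qed

lemma swap_poly_swap_poly [simp]: "swap_poly i (swap_poly i f) = f"
  by (rule poly_mapping_eqI) simp

lemma swap_poly_add: "swap_poly i (f + g) = swap_poly i f + swap_poly i g"
  by (rule poly_mapping_eqI) (simp add: lookup_add)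

lemma swap_poly_diff: "swap_poly i (f - g) = swap_poly i f - swap_poly i g"
  by (rule poly_mapping_eqI) (simp add: lookup_minus)

lemma swap_poly_0 [simp]: "swap_poly i 0 = 0"
  by (rule poly_mapping_eqI) simp

lemma swap_poly_single: "swap_poly i (Poly_Mapping.single m c) = Poly_Mapping.single (swap_mon i m) c"
  by (rule poly_mapping_eqI) (simp add: lookup_single when_def, metis swap_mon_swap_mon)

lemma swap_poly_1 [simp]: "swap_poly i 1 = 1"
  by (metis one_poly_mapping.abs_eq single_one swap_mon_0 swap_poly_single)

lemma swap_poly_mult: "swap_poly i (f * g) = swap_poly i f * swap_poly i g"
proof -
  have monomial_case: "swap_poly i (frag_of a * g) = swap_poly i (frag_of a) * swap_poly i g" for a
    using subset_UNIV
  proof (induction g rule: frag_induction)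
    case (one x)
    then show ?case by (simp add: mult_single swap_poly_single swap_mon_add)
  next
    case (diff a b)
    then show ?case by (simp add: algebra_simps swap_poly_diff)
  qed auto
  show ?thesis
    using subset_UNIV
  proof (induction f rule: frag_induction)
    case (diff a b)
    then show ?case by (simp add: algebra_simps swap_poly_diff)
  qed (auto simp: monomial_case)
qed

lemma swap_poly_prod: "swap_poly i (prod F S) = (\<Prod>x\<in>S. swap_poly i (F x))"
  by (induction S rule: infinite_finite_induct) (simp_all add: swap_poly_mult)

lemma swap_poly_sum: "swap_poly i (sum F S) = (\<Sum>x\<in>S. swap_poly i (F x))"
  by (induction S rule: infinite_finite_induct) (simp_all add: swap_poly_add)

lemma swap_poly_var: "swap_poly i (var k) = var (stransp i k)"
  by (simp add: var_def swap_poly_single swap_mon_single)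

lemma swap_poly_var_simps [simp]:
  "swap_poly i (var i) = var (Suc i)"
  "swap_poly i (var (Suc i)) = var i"
  "k \<noteq> i \<Longrightarrow> k \<noteq> Suc i \<Longrightarrow> swap_poly i (var k) = var k"
  by (simp_all add: swap_poly_var)

lemma swap_poly_commute:
  assumes "j \<noteq> i" "j \<noteq> Suc i" "i \<noteq> Suc j"
  shows "swap_poly i (swap_poly j f) = swap_poly j (swap_poly i f)"
proof (rule poly_mapping_eqI)
  fix m
  have "swap_mon j (swap_mon i m) = swap_mon i (swap_mon j m)"
    by (rule poly_mapping_eqI) (simp add: stransp_commute[OF assms])
  then show "lookup (swap_poly i (swap_poly j f)) m = lookup (swap_poly j (swap_poly i f)) m"
    by simp
qed

lemma swap_poly_braid:
  "swap_poly i (swap_poly (Suc i) (swap_poly i f)) =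
   swap_poly (Suc i) (swap_poly i (swap_poly (Suc i) f))"
proof (rule poly_mapping_eqI)
  fix m
  have "swap_mon i (swap_mon (Suc i) (swap_mon i m)) =
        swap_mon (Suc i) (swap_mon i (swap_mon (Suc i) m))"
    by (rule poly_mapping_eqI) (simp add: stransp_braid)
  then show "lookup (swap_poly i (swap_poly (Suc i) (swap_poly i f))) m =
             lookup (swap_poly (Suc i) (swap_poly i (swap_poly (Suc i) f))) m"
    by simp
qed

section \<open>Divided differences\<close>

lemma var_eq_iff [simp]: "var i = var j \<longleftrightarrow> i = j"
proof
  assume "var i = var j"
  then have "Poly_Mapping.single i (1::nat) = Poly_Mapping.single j 1"
    by (simp add: var_def frag_of_eq)
  then show "i = j"
    by (metis lookup_single_eq lookup_single_not_eq one_neq_zero)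
qed simp

lemma divdiff_eqI:
  assumes "(var k - var (Suc k)) * g = f - swap_poly k f"
  shows "divdiff k f = g"
  unfolding divdiff_def
proof (rule the_equality)
  fix g' assume "f - swap_poly k f = (var k - var (Suc k)) * g'"
  with assms show "g' = g" by auto
qed (use assms in simp)

definition update2 :: "(nat \<Rightarrow>\<^sub>0 nat) \<Rightarrow> nat \<Rightarrow> nat \<Rightarrow> nat \<Rightarrow> (nat \<Rightarrow>\<^sub>0 nat)" where
  "update2 b k x y = Poly_Mapping.update (Suc k) y (Poly_Mapping.update k x b)"

lemma lookup_update2:
  "lookup (update2 b k x y) i = (if i = k then x else if i = Suc k then y else lookup b i)"
  by (simp add: update2_def update.rep_eq)

lemma update2_self: "update2 b k (lookup b k) (lookup b (Suc k)) = b"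
  by (rule poly_mapping_eqI) (simp add: lookup_update2)

lemma update2_swapped: "update2 b k (lookup b (Suc k)) (lookup b k) = swap_mon k b"
  by (rule poly_mapping_eqI) (simp add: lookup_update2)

lemma var_mult_monomial: "var k * monomial c = monomial (c + Poly_Mapping.single k 1)"
  by (simp add: var_def mult_single add.commute)

lemma var_mult_update2:
  "var k * monomial (update2 b k x y) = monomial (update2 b k (Suc x) y)"
  "var (Suc k) * monomial (update2 b k x y) = monomial (update2 b k x (Suc y))"
  unfolding var_mult_monomial
  by (rule arg_cong[where f = monomial], rule poly_mapping_eqI,
      simp add: lookup_update2 lookup_add lookup_single)+

lemma divdiff_telescope:
  assumes "y \<le> x"
  shows "(var k - var (Suc k)) * (\<Sum>t<x - y. monomial (update2 b k (y + t) (x - 1 - t))) =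
         monomial (update2 b k x y) - monomial (update2 b k y x)"
proof -
  define F where "F t = monomial (update2 b k (y + t) (x - t))" for t
  have "(var k - var (Suc k)) * monomial (update2 b k (y + t) (x - 1 - t)) = F (Suc t) - F t"
    if "t < x - y" for t
    using that by (simp add: algebra_simps var_mult_update2 F_def Suc_diff_Suc)
  then have "(var k - var (Suc k)) * (\<Sum>t<x - y. monomial (update2 b k (y + t) (x - 1 - t))) =
             (\<Sum>t<x - y. F (Suc t) - F t)"
    unfolding sum_distrib_left by (intro sum.cong) auto
  also have "\<dots> = F (x - y) - F 0"
    by (rule sum_lessThan_telescope)
  finally show ?thesis
    using assms by (simp add: F_def)
qed

definition divdiff_monomial :: "nat \<Rightarrow> (nat \<Rightarrow>\<^sub>0 nat) \<Rightarrow> mpoly" where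
  "divdiff_monomial k b =
    (let p = lookup b k; q = lookup b (Suc k) in
     if q \<le> p then (\<Sum>t<p - q. monomial (update2 b k (q + t) (p - 1 - t)))
     else - (\<Sum>t<q - p. monomial (update2 b k (p + t) (q - 1 - t))))"

lemma divdiff_monomial_eq:
  "(var k - var (Suc k)) * divdiff_monomial k b = monomial b - swap_poly k (monomial b)"
proof (cases "lookup b (Suc k) \<le> lookup b k")
  case True
  then show ?thesis
    using divdiff_telescope[OF True, of k b]
    by (simp add: divdiff_monomial_def Let_def update2_self update2_swapped swap_poly_single)
next
  case False
  then have "lookup b k \<le> lookup b (Suc k)" by simp
  from divdiff_telescope[OF this, of k b] False show ?thesis
    by (simp add: divdiff_monomial_def Let_def update2_self update2_swapped swap_poly_single)
qed

lemma var_diff_mult_frag_extend: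
  "(var k - var (Suc k)) * frag_extend (divdiff_monomial k) f = f - swap_poly k f"
  using subset_UNIV
proof (induction f rule: frag_induction)
  case (one x)
  then show ?case by (simp add: divdiff_monomial_eq)
next
  case (diff a b)
  then show ?case by (simp add: frag_extend_diff right_diff_distrib swap_poly_diff)
qed simp

lemma divdiff_frag_extend: "divdiff k f = frag_extend (divdiff_monomial k) f"
  by (rule divdiff_eqI[OF var_diff_mult_frag_extend])

lemma var_diff_mult_divdiff: "(var k - var (Suc k)) * divdiff k f = f - swap_poly k f"
  by (simp add: divdiff_frag_extend var_diff_mult_frag_extend)

lemma keys_divdiff_monomialE:
  assumes "c \<in> keys (divdiff_monomial k b)"
  obtains x y where "c = update2 b k x y" "x + y + 1 = lookup b k + lookup b (Suc k)"
    "x < max (lookup b k) (lookup b (Suc k))" "y < max (lookup b k) (lookup b (Suc k))"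
proof -
  have keys_sum_monomial: "keys (\<Sum>t\<in>T. monomial (g t)) \<subseteq> g ` T"
    for g :: "nat \<Rightarrow> nat \<Rightarrow>\<^sub>0 nat" and T
    using keys_sum[of "\<lambda>t. monomial (g t)" T] by auto
  define p q where "p = lookup b k" and "q = lookup b (Suc k)"
  consider (le) "q \<le> p" | (gt) "p < q"
    by linarith
  then show thesis
  proof cases
    case le
    with assms have "c \<in> keys (\<Sum>t<p - q. monomial (update2 b k (q + t) (p - 1 - t)))"
      by (simp add: divdiff_monomial_def Let_def p_def q_def)
    then have "c \<in> (\<lambda>t. update2 b k (q + t) (p - 1 - t)) ` {..<p - q}"
      by (rule subsetD[OF keys_sum_monomial])
    then obtain t where "t < p - q" "c = update2 b k (q + t) (p - 1 - t)"
      by blast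
    with le show thesis
      by (intro that[of "q + t" "p - 1 - t"]) (simp_all add: p_def q_def)
  next
    case gt
    with assms have "c \<in> keys (\<Sum>t<q - p. monomial (update2 b k (p + t) (q - 1 - t)))"
      by (simp add: divdiff_monomial_def Let_def p_def q_def)
    then have "c \<in> (\<lambda>t. update2 b k (p + t) (q - 1 - t)) ` {..<q - p}"
      by (rule subsetD[OF keys_sum_monomial])
    then obtain t where "t < q - p" "c = update2 b k (p + t) (q - 1 - t)"
      by blast
    with gt show thesis
      by (intro that[of "p + t" "q - 1 - t"]) (simp_all add: p_def q_def)
  qed
qed

lemma keys_divdiffE:
  assumes "c \<in> keys (divdiff k f)"
  obtains b x y where "b \<in> keys f" "c = update2 b k x y"
    "x + y + 1 = lookup b k + lookup b (Suc k)"
    "x < max (lookup b k) (lookup b (Suc k))" "y < max (lookup b k) (lookup b (Suc k))"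
proof -
  have "c \<in> (\<Union>b\<in>keys f. keys (divdiff_monomial k b))"
    using assms unfolding divdiff_frag_extend by (rule subsetD[OF keys_frag_extend])
  then obtain b where "b \<in> keys f" "c \<in> keys (divdiff_monomial k b)"
    by blast
  then show thesis
    using that by (elim keys_divdiff_monomialE) blast
qed

lemma divdiff_monomial_step:
  assumes "lookup b k = Suc (lookup b (Suc k))"
  shows "divdiff k (monomial b) = monomial (update2 b k (lookup b (Suc k)) (lookup b (Suc k)))"
  using assms by (simp add: divdiff_frag_extend divdiff_monomial_def Let_def)

lemma swap_poly_divdiff [simp]: "swap_poly k (divdiff k f) = divdiff k f"
proof -
  have "(var k - var (Suc k)) * swap_poly k (divdiff k f) = f - swap_poly k f"
    using arg_cong[OF var_diff_mult_divdiff[of k f], of "swap_poly k"]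
    by (simp add: swap_poly_mult swap_poly_diff algebra_simps)
  then show ?thesis
    by (rule divdiff_eqI[symmetric])
qed

lemma divdiff_eq_0_iff: "divdiff k f = 0 \<longleftrightarrow> swap_poly k f = f"
  using var_diff_mult_divdiff[of k f] by (auto intro: divdiff_eqI)

lemma divdiff_diff: "divdiff k (f - g) = divdiff k f - divdiff k g"
  by (rule divdiff_eqI)
    (simp add: right_diff_distrib var_diff_mult_divdiff swap_poly_diff)

lemma divdiff_mult_symmetric:
  assumes "swap_poly k a = a"
  shows "divdiff k (f * a) = divdiff k f * a"
proof (rule divdiff_eqI)
  have "(var k - var (Suc k)) * (divdiff k f * a) = ((var k - var (Suc k)) * divdiff k f) * a"
    by (simp only: mult.assoc)
  also have "\<dots> = (f - swap_poly k f) * a"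
    by (simp only: var_diff_mult_divdiff)
  finally show "(var k - var (Suc k)) * (divdiff k f * a) = f * a - swap_poly k (f * a)"
    using assms by (simp add: swap_poly_mult left_diff_distrib)
qed

lemma swap_poly_divdiff_commute:
  assumes "j \<noteq> k" "j \<noteq> Suc k" "k \<noteq> Suc j"
  shows "swap_poly j (divdiff k f) = divdiff k (swap_poly j f)"
proof (rule divdiff_eqI[symmetric])
  have "swap_poly j ((var k - var (Suc k)) * divdiff k f) = swap_poly j (f - swap_poly k f)"
    by (simp add: var_diff_mult_divdiff)
  then show "(var k - var (Suc k)) * swap_poly j (divdiff k f) =
             swap_poly j f - swap_poly k (swap_poly j f)"
    using assms swap_poly_commute[of k j f] by (simp add: swap_poly_mult swap_poly_diff)
qed

lemma divdiff_divdiff_expansion: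
  assumes "j \<noteq> i" "j \<noteq> Suc i" "i \<noteq> Suc j"
  shows "(var i - var (Suc i)) * (var j - var (Suc j)) * divdiff i (divdiff j f) =
    f - swap_poly j f - swap_poly i f + swap_poly j (swap_poly i f)"
proof -
  let ?A = "var i - var (Suc i)" and ?B = "var j - var (Suc j)"
  have "?A * ?B * divdiff i (divdiff j f) = ?B * (divdiff j f - swap_poly i (divdiff j f))"
    by (simp add: var_diff_mult_divdiff mult.assoc mult.left_commute[of ?A])
  also have "\<dots> = ?B * divdiff j f - ?B * divdiff j (swap_poly i f)"
    using assms by (simp add: swap_poly_divdiff_commute algebra_simps)
  also have "\<dots> = f - swap_poly j f - swap_poly i f + swap_poly j (swap_poly i f)"
    by (simp add: var_diff_mult_divdiff)
  finally show ?thesis .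
qed

lemma divdiff_commute:
  assumes "j \<noteq> i" "j \<noteq> Suc i" "i \<noteq> Suc j"
  shows "divdiff i (divdiff j f) = divdiff j (divdiff i f)"
proof -
  let ?A = "var i - var (Suc i)" and ?B = "var j - var (Suc j)"
  have "?A * ?B * divdiff i (divdiff j f) = ?B * ?A * divdiff j (divdiff i f)"
    using divdiff_divdiff_expansion[OF assms, of f] divdiff_divdiff_expansion[of i j f] assms
      swap_poly_commute[OF assms, of f]
    by simp
  moreover have "?A * ?B \<noteq> 0"
    by simp
  ultimately show ?thesis
    by (simp add: mult.commute[of ?B])
qed

text \<open>Both sides of the braid relation, multiplied by the three differences \<open>x\<^sub>a - x\<^sub>b\<close>
  with \<open>i \<le> a < b \<le> i + 2\<close>, become the same alternating sum over the six orderings of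
  \<open>x\<^sub>i, x\<^sub>i\<^sub>+\<^sub>1, x\<^sub>i\<^sub>+\<^sub>2\<close>.\<close>
lemma divdiff_triple_expansion:
  assumes jk: "(j = i \<and> k = Suc i) \<or> (j = Suc i \<and> k = i)"
  defines "A \<equiv> var j - var (Suc j)" and "B \<equiv> var k - var (Suc k)"
    and "C \<equiv> var i - var (Suc (Suc i))"
  shows "A * B * C * divdiff j (divdiff k (divdiff j f)) =
     f - swap_poly j f - swap_poly k f + swap_poly k (swap_poly j f)
     + swap_poly j (swap_poly k f) - swap_poly j (swap_poly k (swap_poly j f))"
proof -
  define g1 where "g1 = divdiff j f"
  define g2 where "g2 = divdiff k g1"
  have e1: "A * g1 = f - swap_poly j f" unfolding A_def g1_def by (rule var_diff_mult_divdiff)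
  have e2: "B * g2 = g1 - swap_poly k g1" unfolding B_def g2_def by (rule var_diff_mult_divdiff)
  have e3: "A * divdiff j g2 = g2 - swap_poly j g2" unfolding A_def by (rule var_diff_mult_divdiff)
  have sB: "swap_poly j B = C" and sA: "swap_poly k A = C" and sC: "swap_poly j C = B"
    and CB: "C - B = A"
    using jk by (auto simp: A_def B_def C_def swap_poly_diff)
  have e2': "C * swap_poly j g2 = g1 - swap_poly j (swap_poly k g1)"
    using arg_cong[OF e2, of "swap_poly j"] by (simp add: swap_poly_mult swap_poly_diff sB g1_def)
  have e1': "C * swap_poly k g1 = swap_poly k f - swap_poly k (swap_poly j f)"
    using arg_cong[OF e1, of "swap_poly k"] by (simp add: swap_poly_mult swap_poly_diff sA)
  have e1'': "B * swap_poly j (swap_poly k g1) =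
      swap_poly j (swap_poly k f) - swap_poly j (swap_poly k (swap_poly j f))"
    using arg_cong[OF e1', of "swap_poly j"] by (simp add: swap_poly_mult swap_poly_diff sC)
  have "A * B * C * divdiff j g2 = B * C * (A * divdiff j g2)"
    by (simp only: ac_simps)
  also have "\<dots> = C * (B * g2) - B * (C * swap_poly j g2)"
    unfolding e3 by (simp add: algebra_simps)
  also have "\<dots> = (C - B) * g1 - C * swap_poly k g1 + B * swap_poly j (swap_poly k g1)"
    unfolding e2 e2' by (simp add: algebra_simps)
  also have "\<dots> = A * g1 - C * swap_poly k g1 + B * swap_poly j (swap_poly k g1)"
    by (simp only: CB)
  also have "\<dots> = (f - swap_poly j f) - (swap_poly k f - swap_poly k (swap_poly j f))
      + (swap_poly j (swap_poly k f) - swap_poly j (swap_poly k (swap_poly j f)))"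
    by (simp only: e1 e1' e1'')
  finally show ?thesis
    by (simp add: g2_def g1_def algebra_simps)
qed

lemma divdiff_braid:
  "divdiff i (divdiff (Suc i) (divdiff i f)) = divdiff (Suc i) (divdiff i (divdiff (Suc i) f))"
proof -
  let ?A = "var i - var (Suc i)" and ?B = "var (Suc i) - var (Suc (Suc i))"
    and ?C = "var i - var (Suc (Suc i))"
  have "?A * ?B * ?C * divdiff i (divdiff (Suc i) (divdiff i f)) =
     f - swap_poly i f - swap_poly (Suc i) f + swap_poly (Suc i) (swap_poly i f)
     + swap_poly i (swap_poly (Suc i) f) - swap_poly i (swap_poly (Suc i) (swap_poly i f))"
    by (rule divdiff_triple_expansion) simp
  moreover have "?B * ?A * ?C * divdiff (Suc i) (divdiff i (divdiff (Suc i) f)) =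
     f - swap_poly (Suc i) f - swap_poly i f + swap_poly i (swap_poly (Suc i) f)
     + swap_poly (Suc i) (swap_poly i f) - swap_poly (Suc i) (swap_poly i (swap_poly (Suc i) f))"
    by (rule divdiff_triple_expansion) simp
  ultimately have "?A * ?B * ?C * divdiff i (divdiff (Suc i) (divdiff i f)) =
                   ?A * ?B * ?C * divdiff (Suc i) (divdiff i (divdiff (Suc i) f))"
    by (simp add: swap_poly_braid mult.commute[of ?B])
  moreover have "?A * ?B * ?C \<noteq> 0"
    by simp
  ultimately show ?thesis
    by simp
qed

lemma keys_subset_of_swap_poly_invariant:
  assumes "swap_poly t f = f" and "\<And>m. m \<in> keys f \<Longrightarrow> keys m \<subseteq> {1..<Suc t}"
    and "m \<in> keys f"
  shows "keys m \<subseteq> {1..<t}"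
proof -
  have "t \<notin> keys m"
  proof
    assume "t \<in> keys m"
    have "lookup f (swap_mon t m) = lookup f m"
      using arg_cong[OF assms(1), of "\<lambda>f. lookup f m"] by simp
    then have "swap_mon t m \<in> keys f"
      using assms(3) by (simp add: in_keys_iff)
    moreover have "Suc t \<in> keys (swap_mon t m)"
      using \<open>t \<in> keys m\<close> by (simp add: in_keys_iff)
    ultimately show False
      using assms(2) by fastforce
  qed
  show ?thesis
  proof
    fix x assume "x \<in> keys m"
    with assms(2)[OF assms(3)] have "1 \<le> x" "x < Suc t"
      by auto
    with \<open>x \<in> keys m\<close> \<open>t \<notin> keys m\<close> show "x \<in> {1..<t}"
      by (cases "x = t") auto
  qed
qed

lemma keys_subset_0_of_swap_poly_invariant:
  assumes symmetric: "\<And>k. 1 \<le> k \<Longrightarrow> k < n \<Longrightarrow> swap_poly k f = f"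
    and keys: "\<And>m. m \<in> keys f \<Longrightarrow> keys m \<subseteq> {1..<n}"
  shows "keys f \<subseteq> {0}"
proof -
  have "\<forall>m\<in>keys f. keys m \<subseteq> {1..<n - d}" for d
  proof (induction d)
    case 0
    then show ?case using keys by simp
  next
    case (Suc d)
    show ?case
    proof (cases "n - d \<le> 1")
      case True
      with Suc.IH show ?thesis by auto
    next
      case False
      then have "n - d = Suc (n - Suc d)" "1 \<le> n - Suc d" "n - Suc d < n"
        by auto
      with Suc.IH show ?thesis
        using keys_subset_of_swap_poly_invariant[of "n - Suc d" f] symmetric by metis
    qed
  qed
  from this[of n] show ?thesis
    by auto
qed

lemma mpoly_eqI_by_divdiff:
  assumes "\<And>m. m \<in> keys f \<Longrightarrow> keys m \<subseteq> {1..<n}" "\<And>m. m \<in> keys g \<Longrightarrow> keys m \<subseteq> {1..<n}"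
    and "\<And>k. 1 \<le> k \<Longrightarrow> k < n \<Longrightarrow> divdiff k f = divdiff k g"
    and "lookup f 0 = lookup g 0"
  shows "f = g"
proof -
  have "keys (f - g) \<subseteq> {0}"
  proof (rule keys_subset_0_of_swap_poly_invariant)
    show "swap_poly k (f - g) = f - g" if "1 \<le> k" "k < n" for k
      using assms(3)[OF that] by (simp add: divdiff_diff divdiff_eq_0_iff[symmetric])
    show "keys m \<subseteq> {1..<n}" if "m \<in> keys (f - g)" for m
      using that keys_diff[of f g] assms(1,2) by blast
  qed
  moreover have "lookup (f - g) 0 = 0"
    using assms(4) by (simp add: lookup_minus)
  ultimately have "f - g = 0"
    by (intro poly_mapping_eqI) (metis in_keys_iff lookup_zero singletonD subsetD)
  then show ?thesis
    by simp
qed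

definition eval_monomial :: "(nat \<Rightarrow> int) \<Rightarrow> (nat \<Rightarrow>\<^sub>0 nat) \<Rightarrow> int" where
  "eval_monomial a m = (\<Prod>i\<in>keys m. a i ^ lookup m i)"

definition eval_mpoly :: "(nat \<Rightarrow> int) \<Rightarrow> mpoly \<Rightarrow> int" where
  "eval_mpoly a f = (\<Sum>m\<in>keys f. lookup f m * eval_monomial a m)"

lemma eval_monomial_superset:
  "finite S \<Longrightarrow> keys m \<subseteq> S \<Longrightarrow> eval_monomial a m = (\<Prod>i\<in>S. a i ^ lookup m i)"
  unfolding eval_monomial_def by (rule prod.mono_neutral_left) (auto simp: in_keys_iff)

lemma eval_monomial_add: "eval_monomial a (m + m') = eval_monomial a m * eval_monomial a m'"
proof -
  let ?S = "keys m \<union> keys m'"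
  have "eval_monomial a (m + m') = (\<Prod>i\<in>?S. a i ^ lookup (m + m') i)"
    by (rule eval_monomial_superset) (use keys_add[of m m'] in auto)
  also have "\<dots> = (\<Prod>i\<in>?S. a i ^ lookup m i) * (\<Prod>i\<in>?S. a i ^ lookup m' i)"
    by (simp add: lookup_add power_add prod.distrib)
  also have "\<dots> = eval_monomial a m * eval_monomial a m'"
    using eval_monomial_superset[of ?S m a] eval_monomial_superset[of ?S m' a] by simp
  finally show ?thesis .
qed

lemma eval_monomial_0 [simp]: "eval_monomial a 0 = 1"
  by (simp add: eval_monomial_def)

lemma eval_monomial_swap_mon: "eval_monomial a (swap_mon i m) = eval_monomial (\<lambda>j. a (stransp i j)) m"
proof -
  have "eval_monomial a (swap_mon i m) = (\<Prod>k\<in>stransp i ` keys m. a k ^ lookup m (stransp i k))"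
    by (simp add: eval_monomial_def keys_swap_mon)
  also have "\<dots> = (\<Prod>j\<in>keys m. a (stransp i j) ^ lookup m j)"
    by (subst prod.reindex) (auto intro: inj_on_subset[OF inj_stransp])
  finally show ?thesis
    by (simp add: eval_monomial_def)
qed

lemma eval_mpoly_superset:
  "finite S \<Longrightarrow> keys f \<subseteq> S \<Longrightarrow> eval_mpoly a f = (\<Sum>m\<in>S. lookup f m * eval_monomial a m)"
  unfolding eval_mpoly_def by (rule sum.mono_neutral_left) (auto simp: in_keys_iff)

lemma eval_mpoly_add: "eval_mpoly a (f + g) = eval_mpoly a f + eval_mpoly a g"
proof -
  let ?S = "keys f \<union> keys g"
  have "eval_mpoly a (f + g) = (\<Sum>m\<in>?S. lookup (f + g) m * eval_monomial a m)"
    by (rule eval_mpoly_superset) (use keys_add[of f g] in auto)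
  also have "\<dots> = (\<Sum>m\<in>?S. lookup f m * eval_monomial a m) + (\<Sum>m\<in>?S. lookup g m * eval_monomial a m)"
    by (simp add: lookup_add algebra_simps sum.distrib)
  also have "\<dots> = eval_mpoly a f + eval_mpoly a g"
    using eval_mpoly_superset[of ?S f a] eval_mpoly_superset[of ?S g a] by simp
  finally show ?thesis .
qed

lemma eval_mpoly_uminus: "eval_mpoly a (- f) = - eval_mpoly a f"
  by (simp add: eval_mpoly_def sum_negf)

lemma eval_mpoly_diff: "eval_mpoly a (f - g) = eval_mpoly a f - eval_mpoly a g"
  using eval_mpoly_add[of a f "- g"] by (simp add: eval_mpoly_uminus)

lemma eval_mpoly_0 [simp]: "eval_mpoly a 0 = 0"
  by (simp add: eval_mpoly_def)

lemma eval_mpoly_single: "eval_mpoly a (Poly_Mapping.single m c) = c * eval_monomial a m"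
  by (cases "c = 0") (simp_all add: eval_mpoly_def)

lemma eval_mpoly_mult: "eval_mpoly a (f * g) = eval_mpoly a f * eval_mpoly a g"
proof -
  have monomial_case: "eval_mpoly a (frag_of m * g) = eval_mpoly a (frag_of m) * eval_mpoly a g" for m
    using subset_UNIV
  proof (induction g rule: frag_induction)
    case (one x)
    then show ?case by (simp add: mult_single eval_mpoly_single eval_monomial_add)
  next
    case (diff g h)
    then show ?case by (simp add: algebra_simps eval_mpoly_diff)
  qed auto
  show ?thesis
    using subset_UNIV
  proof (induction f rule: frag_induction)
    case (diff f h)
    then show ?case by (simp add: algebra_simps eval_mpoly_diff)
  qed (auto simp: monomial_case)
qed

lemma eval_mpoly_1 [simp]: "eval_mpoly a 1 = 1"
  by (metis eval_mpoly_single eval_monomial_0 mult_1 one_poly_mapping.abs_eq single_one)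

lemma eval_mpoly_var [simp]: "eval_mpoly a (var k) = a k"
  by (simp add: var_def eval_mpoly_single eval_monomial_def)

lemma eval_mpoly_prod: "eval_mpoly a (prod F S) = (\<Prod>x\<in>S. eval_mpoly a (F x))"
  by (induction S rule: infinite_finite_induct) (simp_all add: eval_mpoly_mult)

lemma eval_mpoly_swap_poly: "eval_mpoly a (swap_poly i f) = eval_mpoly (\<lambda>j. a (stransp i j)) f"
  using subset_UNIV
proof (induction f rule: frag_induction)
  case (one x)
  then show ?case by (simp add: swap_poly_single eval_mpoly_single eval_monomial_swap_mon)
next
  case (diff f g)
  then show ?case by (simp add: eval_mpoly_diff swap_poly_diff)
qed simp

lemma eval_mpoly_zero_point: "eval_mpoly (\<lambda>_. 0) f = lookup f 0"
proof -
  have "eval_monomial (\<lambda>_. 0) m = (if m = 0 then 1 else 0)" for m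
  proof (cases "m = 0")
    case False
    then obtain i where "i \<in> keys m"
      by (metis keys_eq_empty ex_in_conv)
    then show ?thesis
      using False by (auto simp: eval_monomial_def in_keys_iff prod_zero_iff)
  qed simp
  then have "eval_mpoly (\<lambda>_. 0) f = (\<Sum>m\<in>insert 0 (keys f). lookup f m * (if m = 0 then 1 else 0))"
    by (subst eval_mpoly_superset[of "insert 0 (keys f)"]) auto
  also have "\<dots> = lookup f 0"
    by (simp add: if_distrib sum.delta cong: if_cong)
  finally show ?thesis .
qed

abbreviation eval_unit :: "nat \<Rightarrow> mpoly \<Rightarrow> int" where
  "eval_unit k \<equiv> eval_mpoly (\<lambda>j. if j = k then 1 else 0)"

lemma eval_unit_swap_poly: "eval_unit k (swap_poly k f) = eval_unit (Suc k) f"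
proof -
  have "(\<lambda>j. if stransp k j = k then 1 else 0) = (\<lambda>j. if j = Suc k then 1 else (0::int))"
    by (simp add: stransp_eq_index_iff)
  then show ?thesis
    by (simp only: eval_mpoly_swap_poly)
qed

lemma eval_unit_divdiff: "eval_unit k (divdiff k f) = eval_unit k f - eval_unit (Suc k) f"
  using arg_cong[OF var_diff_mult_divdiff[of k f], of "eval_unit k"]
  by (simp add: eval_mpoly_mult eval_mpoly_diff eval_unit_swap_poly)

lemma eval_unit_not_in_keys:
  assumes "\<And>m. m \<in> keys f \<Longrightarrow> k \<notin> keys m"
  shows "eval_unit k f = lookup f 0"
proof -
  have "eval_monomial (\<lambda>j. if j = k then 1 else 0) m = eval_monomial (\<lambda>_. 0) m" if "m \<in> keys f" for m
    unfolding eval_monomial_def by (rule prod.cong) (use assms[OF that] in auto)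
  then have "eval_unit k f = eval_mpoly (\<lambda>_. 0) f"
    unfolding eval_mpoly_def by (intro sum.cong) auto
  then show ?thesis
    by (simp add: eval_mpoly_zero_point)
qed

section \<open>Complete homogeneous polynomials\<close>

definition total_degree :: "(nat \<Rightarrow>\<^sub>0 nat) \<Rightarrow> nat" where
  "total_degree m = (\<Sum>k\<in>keys m. lookup m k)"

lemma total_degree_superset:
  "finite S \<Longrightarrow> keys m \<subseteq> S \<Longrightarrow> total_degree m = (\<Sum>k\<in>S. lookup m k)"
  unfolding total_degree_def by (rule sum.mono_neutral_left) (auto simp: in_keys_iff)

lemma total_degree_add: "total_degree (m + m') = total_degree m + total_degree m'"
proof -
  let ?S = "keys m \<union> keys m'"
  have "total_degree (m + m') = (\<Sum>k\<in>?S. lookup (m + m') k)"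
    by (rule total_degree_superset) (use keys_add[of m m'] in auto)
  also have "\<dots> = (\<Sum>k\<in>?S. lookup m k) + (\<Sum>k\<in>?S. lookup m' k)"
    by (simp add: lookup_add sum.distrib)
  also have "\<dots> = total_degree m + total_degree m'"
    using total_degree_superset[of ?S m] total_degree_superset[of ?S m'] by simp
  finally show ?thesis .
qed

lemma total_degree_single [simp]: "total_degree (Poly_Mapping.single k c) = c"
  by (cases "c = 0") (simp_all add: total_degree_def)

lemma total_degree_0 [simp]: "total_degree 0 = 0"
  by (simp add: total_degree_def)

lemma lookup_le_total_degree: "lookup m k \<le> total_degree m"
  by (cases "k \<in> keys m") (auto simp: total_degree_def in_keys_iff intro: member_le_sum)

lemma total_degree_eq_0_iff: "total_degree m = 0 \<longleftrightarrow> m = 0"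
proof
  assume "total_degree m = 0"
  then have "lookup m k = 0" for k
    using lookup_le_total_degree[of m k] by simp
  then show "m = 0"
    by (intro poly_mapping_eqI) simp
qed simp

lemma total_degree_swap_mon: "total_degree (swap_mon k m) = total_degree m"
proof -
  have "total_degree (swap_mon k m) = (\<Sum>j\<in>stransp k ` keys m. lookup m (stransp k j))"
    by (simp add: total_degree_def keys_swap_mon)
  also have "\<dots> = (\<Sum>i\<in>keys m. lookup m i)"
    by (subst sum.reindex) (auto intro: inj_on_subset[OF inj_stransp])
  finally show ?thesis
    by (simp add: total_degree_def)
qed

definition monomials_in :: "nat set \<Rightarrow> nat \<Rightarrow> (nat \<Rightarrow>\<^sub>0 nat) set" where
  "monomials_in S d = {m. keys m \<subseteq> S \<and> total_degree m = d}"

definition complete_hom :: "nat set \<Rightarrow> nat \<Rightarrow> mpoly" where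
  "complete_hom S d = (\<Sum>m\<in>monomials_in S d. monomial m)"

lemma hcomp_eq_complete_hom: "hcomp i d = complete_hom {1..i} d"
  unfolding hcomp_def complete_hom_def monomials_in_def total_degree_def ..

lemma finite_monomials_in:
  assumes "finite S"
  shows "finite (monomials_in S d)"
proof -
  let ?r = "\<lambda>m. restrict (lookup m) S"
  have "inj_on ?r (monomials_in S d)"
  proof (rule inj_onI, rule poly_mapping_eqI)
    fix m m' k
    assume m: "m \<in> monomials_in S d" "m' \<in> monomials_in S d" and eq: "?r m = ?r m'"
    show "lookup m k = lookup m' k"
    proof (cases "k \<in> S")
      case True
      then show ?thesis using fun_cong[OF eq, of k] by simp
    next
      case False
      with m have "k \<notin> keys m" "k \<notin> keys m'"
        by (auto simp: monomials_in_def)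
      then show ?thesis by (simp add: in_keys_iff)
    qed
  qed
  moreover have "?r ` monomials_in S d \<subseteq> PiE S (\<lambda>_. {0..d})"
    using lookup_le_total_degree by (auto simp: monomials_in_def)
  then have "finite (?r ` monomials_in S d)"
    by (rule finite_subset) (use assms in \<open>intro finite_PiE, auto\<close>)
  ultimately show ?thesis
    by (rule finite_imageD[rotated])
qed

lemma lookup_complete_hom:
  "finite S \<Longrightarrow> lookup (complete_hom S d) m = (if m \<in> monomials_in S d then 1 else 0)"
  unfolding complete_hom_def by (simp add: lookup_sum lookup_single when_def finite_monomials_in)

lemma keys_complete_hom: "finite S \<Longrightarrow> keys (complete_hom S d) = monomials_in S d"
  by (auto simp: in_keys_iff lookup_complete_hom split: if_splits)

lemma monomials_in_0: "monomials_in S 0 = {0}"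
  by (auto simp: monomials_in_def total_degree_eq_0_iff)

lemma complete_hom_0 [simp]: "complete_hom S 0 = 1"
  by (simp add: complete_hom_def monomials_in_0)

lemma complete_hom_empty: "d \<noteq> 0 \<Longrightarrow> complete_hom {} d = 0"
  by (auto simp: complete_hom_def monomials_in_def total_degree_eq_0_iff)

lemma monomials_in_insert:
  assumes "y \<notin> S" "d \<noteq> 0"
  shows "monomials_in (insert y S) d =
    monomials_in S d \<union> (\<lambda>m. m + Poly_Mapping.single y 1) ` monomials_in (insert y S) (d - 1)"
    (is "?L = ?R")
proof
  show "?L \<subseteq> ?R"
  proof
    fix m assume m: "m \<in> ?L"
    show "m \<in> ?R"
    proof (cases "lookup m y = 0")
      case True
      with m show ?thesis by (auto simp: monomials_in_def in_keys_iff)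
    next
      case False
      define m' where "m' = m - Poly_Mapping.single y 1"
      have m_eq: "m = m' + Poly_Mapping.single y 1"
        using False by (intro poly_mapping_eqI) (auto simp: m'_def lookup_add lookup_minus lookup_single when_def)
      have "keys m' \<subseteq> keys m"
        by (auto simp: m'_def in_keys_iff lookup_minus)
      moreover have "total_degree m' = d - 1"
        using m total_degree_add[of m' "Poly_Mapping.single y 1"] m_eq by (simp add: monomials_in_def)
      ultimately have "m' \<in> monomials_in (insert y S) (d - 1)"
        using m by (auto simp: monomials_in_def)
      with m_eq show ?thesis by blast
    qed
  qed
next
  show "?R \<subseteq> ?L"
  proof
    fix m assume "m \<in> ?R"
    then consider "m \<in> monomials_in S d"
      | m' where "m' \<in> monomials_in (insert y S) (d - 1)" "m = m' + Poly_Mapping.single y 1"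
      by blast
    then show "m \<in> ?L"
    proof cases
      case (2 m')
      have "keys m \<subseteq> insert y S"
        using 2 keys_add[of m' "Poly_Mapping.single y 1"] by (auto simp: monomials_in_def)
      moreover have "total_degree m = d"
        using 2 assms(2) by (simp add: monomials_in_def total_degree_add)
      ultimately show ?thesis by (simp add: monomials_in_def)
    qed (auto simp: monomials_in_def)
  qed
qed

lemma complete_hom_insert:
  assumes "finite S" "y \<notin> S" "d \<noteq> 0"
  shows "complete_hom (insert y S) d = complete_hom S d + var y * complete_hom (insert y S) (d - 1)"
proof -
  let ?f = "\<lambda>m. m + Poly_Mapping.single y (1::nat)"
  have "y \<in> keys (?f m)" for m
    by (simp add: in_keys_iff lookup_add)
  moreover have "y \<notin> keys m" if "m \<in> monomials_in S d" for m
    using that assms(2) by (auto simp: monomials_in_def)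
  ultimately have disjoint: "monomials_in S d \<inter> ?f ` monomials_in (insert y S) (d - 1) = {}"
    by auto
  have "complete_hom (insert y S) d = complete_hom S d + (\<Sum>m\<in>?f ` monomials_in (insert y S) (d - 1). monomial m)"
    unfolding complete_hom_def monomials_in_insert[OF assms(2,3)]
    by (rule sum.union_disjoint) (use assms disjoint in \<open>auto intro: finite_monomials_in\<close>)
  also have "(\<Sum>m\<in>?f ` monomials_in (insert y S) (d - 1). monomial m) =
             (\<Sum>m\<in>monomials_in (insert y S) (d - 1). monomial (?f m))"
    by (rule sum.reindex[unfolded comp_def]) (simp add: inj_on_def)
  also have "\<dots> = var y * complete_hom (insert y S) (d - 1)"
    unfolding complete_hom_def sum_distrib_left by (simp add: var_mult_monomial)
  finally show ?thesis .
qed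

lemma stransp_image_subset_iff: "stransp k ` A \<subseteq> B \<longleftrightarrow> A \<subseteq> stransp k ` B"
proof
  assume "stransp k ` A \<subseteq> B"
  then have "stransp k ` stransp k ` A \<subseteq> stransp k ` B" by (rule image_mono)
  then show "A \<subseteq> stransp k ` B" by (simp add: image_image)
next
  assume "A \<subseteq> stransp k ` B"
  then have "stransp k ` A \<subseteq> stransp k ` stransp k ` B" by (rule image_mono)
  then show "stransp k ` A \<subseteq> B" by (simp add: image_image)
qed

lemma swap_mon_monomials_in: "swap_mon k ` monomials_in S d = monomials_in (stransp k ` S) d"
proof (rule set_eqI)
  fix m
  have "m \<in> swap_mon k ` monomials_in S d \<longleftrightarrow> swap_mon k m \<in> monomials_in S d"
  proof
    assume "swap_mon k m \<in> monomials_in S d"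
    then have "swap_mon k (swap_mon k m) \<in> swap_mon k ` monomials_in S d" by (rule imageI)
    then show "m \<in> swap_mon k ` monomials_in S d" by simp
  qed auto
  also have "\<dots> \<longleftrightarrow> m \<in> monomials_in (stransp k ` S) d"
    by (simp add: monomials_in_def keys_swap_mon total_degree_swap_mon stransp_image_subset_iff)
  finally show "m \<in> swap_mon k ` monomials_in S d \<longleftrightarrow> m \<in> monomials_in (stransp k ` S) d" .
qed

lemma swap_poly_complete_hom: "swap_poly k (complete_hom S d) = complete_hom (stransp k ` S) d"
proof -
  have "swap_poly k (complete_hom S d) = (\<Sum>m\<in>monomials_in S d. monomial (swap_mon k m))"
    by (simp add: complete_hom_def swap_poly_sum swap_poly_single)
  also have "\<dots> = (\<Sum>m\<in>swap_mon k ` monomials_in S d. monomial m)"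
    by (rule sum.reindex[symmetric, unfolded comp_def]) (rule inj_on_subset[OF inj_swap_mon], simp)
  finally show ?thesis
    by (simp add: swap_mon_monomials_in complete_hom_def)
qed

lemma stransp_image_eq:
  assumes "k \<in> S \<longleftrightarrow> Suc k \<in> S"
  shows "stransp k ` S = S"
proof -
  have "stransp k x \<in> S \<longleftrightarrow> x \<in> S" for x
    using assms by (simp add: stransp_apply)
  then have "stransp k ` S \<subseteq> S"
    by auto
  moreover from this have "S \<subseteq> stransp k ` S"
    by (simp add: stransp_image_subset_iff)
  ultimately show ?thesis ..
qed

lemma swap_poly_hcomp: "1 \<le> k \<Longrightarrow> k \<noteq> i \<Longrightarrow> swap_poly k (hcomp i d) = hcomp i d"
  unfolding hcomp_eq_complete_hom swap_poly_complete_hom by (subst stransp_image_eq) auto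

lemma hcomp_0 [simp]: "hcomp i 0 = 1"
  by (simp add: hcomp_eq_complete_hom)

text \<open>Peeling \<open>x\<^sub>i\<close>, respectively \<open>x\<^sub>i\<^sub>+\<^sub>1\<close>, off \<open>h\<^sup>i\<^sup>+\<^sup>1\<^sub>d\<close>
  expresses it through \<open>s\<^sub>i h\<^sup>i\<^sub>d\<close>, respectively \<open>h\<^sup>i\<^sub>d\<close>.\<close>
lemma divdiff_hcomp:
  assumes "1 \<le> i" "d \<noteq> 0"
  shows "divdiff i (hcomp i d) = hcomp (Suc i) (d - 1)"
proof (rule divdiff_eqI)
  let ?A = "{1..<i}"
  have upto_Suc_i: "{1..Suc i} = insert i (insert (Suc i) ?A)" "{1..Suc i} = insert (Suc i) (insert i ?A)"
    and upto_i: "{1..i} = insert i ?A"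
    using assms by auto
  have "stransp i ` ?A = ?A"
    by (rule stransp_image_eq) auto
  then have swapped: "swap_poly i (complete_hom (insert i ?A) d) = complete_hom (insert (Suc i) ?A) d"
    unfolding swap_poly_complete_hom by simp
  have "complete_hom {1..Suc i} d = complete_hom (insert (Suc i) ?A) d + var i * complete_hom {1..Suc i} (d - 1)"
    unfolding upto_Suc_i(1) by (rule complete_hom_insert) (use assms in auto)
  moreover have "complete_hom {1..Suc i} d = complete_hom (insert i ?A) d + var (Suc i) * complete_hom {1..Suc i} (d - 1)"
    unfolding upto_Suc_i(2) by (rule complete_hom_insert) (use assms in auto)
  ultimately show "(var i - var (Suc i)) * hcomp (Suc i) (d - 1) = hcomp i d - swap_poly i (hcomp i d)"
    unfolding hcomp_eq_complete_hom upto_i swapped by (simp add: algebra_simps)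
qed

lemma eval_unit_complete_hom:
  "finite S \<Longrightarrow> eval_unit k (complete_hom S d) = (if k \<in> S \<or> d = 0 then 1 else 0)"
proof (induction S arbitrary: d rule: finite_induct)
  case empty
  then show ?case by (simp add: complete_hom_empty)
next
  case (insert y S)
  show ?case
  proof (induction d)
    case (Suc d)
    then show ?case
      using insert complete_hom_insert[of S y "Suc d"]
      by (cases "y = k") (auto simp: eval_mpoly_add eval_mpoly_mult)
  qed simp
qed

lemma eval_unit_1_hcomp: "1 \<le> i \<Longrightarrow> eval_unit 1 (hcomp i d) = 1"
  by (simp add: hcomp_eq_complete_hom eval_unit_complete_hom)

lemma lookup_hcomp_0: "lookup (hcomp i d) 0 = (if d = 0 then 1 else 0)"
  by (auto simp: hcomp_eq_complete_hom lookup_complete_hom monomials_in_def)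

lemma keys_hcomp: "m \<in> keys (hcomp i d) \<Longrightarrow> keys m \<subseteq> {1..i}"
  by (simp add: hcomp_eq_complete_hom keys_complete_hom monomials_in_def)

definition inversions :: "nat \<Rightarrow> (nat \<Rightarrow> nat) \<Rightarrow> (nat \<times> nat) set" where
  "inversions n w = {(i, j). i \<in> {1..n} \<and> j \<in> {1..n} \<and> i < j \<and> w i > w j}"

lemma perm_length_eq_card_inversions: "perm_length n w = card (inversions n w)"
  by (simp add: perm_length_def inversions_def)

lemma finite_inversions: "finite (inversions n w)"
  by (rule finite_subset[of _ "{1..n} \<times> {1..n}"]) (auto simp: inversions_def)

lemma perm_length_le: "perm_length n w \<le> n * n"
proof -
  have "card (inversions n w) \<le> card ({1..n} \<times> {1..n})"
    by (rule card_mono) (auto simp: inversions_def)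
  then show ?thesis
    by (simp add: perm_length_eq_card_inversions card_cartesian_product)
qed

lemma comp_stransp_stransp [simp]: "w \<circ> stransp k \<circ> stransp k = w"
  by (rule ext) simp

lemma stransp_less_stransp: "i < j \<Longrightarrow> (i, j) \<noteq> (k, Suc k) \<Longrightarrow> stransp k i < stransp k j"
  by (auto simp: stransp_apply)

lemma stransp_in_range: "1 \<le> k \<Longrightarrow> k < n \<Longrightarrow> i \<in> {1..n} \<Longrightarrow> stransp k i \<in> {1..n}"
  by (auto simp: stransp_apply)

lemma permutes_comp_stransp:
  "w permutes {1..n} \<Longrightarrow> 1 \<le> k \<Longrightarrow> k < n \<Longrightarrow> w \<circ> stransp k permutes {1..n}"
  unfolding stransp_def by (rule permutes_compose[OF permutes_swap_id]) auto

lemma permutes_apply_Suc_neq: "w permutes S \<Longrightarrow> w k \<noteq> w (Suc k)"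
  by (metis permutes_inj injD n_not_Suc_n)

text \<open>Outside the pair \<open>(k, k + 1)\<close>, \<open>s\<^sub>k\<close> maps the inversions of \<open>w s\<^sub>k\<close>
  bijectively onto those of \<open>w\<close>.\<close>
lemma card_inversions_comp_stransp:
  assumes "1 \<le> k" "k < n"
  shows "card (inversions n (w \<circ> stransp k) - {(k, Suc k)}) = card (inversions n w - {(k, Suc k)})"
proof -
  let ?s = "\<lambda>(i, j). (stransp k i, stransp k j)"
  have maps: "?s ` (inversions n (v \<circ> stransp k) - {(k, Suc k)}) \<subseteq> inversions n v - {(k, Suc k)}"
    for v
  proof
    fix x assume "x \<in> ?s ` (inversions n (v \<circ> stransp k) - {(k, Suc k)})"
    then obtain i j where ij: "(i, j) \<in> inversions n (v \<circ> stransp k)" "(i, j) \<noteq> (k, Suc k)"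
      and x: "x = (stransp k i, stransp k j)"
      by auto
    moreover from ij have "(stransp k i, stransp k j) \<noteq> (k, Suc k)"
      by (auto simp: inversions_def stransp_apply split: if_splits)
    ultimately show "x \<in> inversions n v - {(k, Suc k)}"
      using stransp_less_stransp[of i j k] stransp_in_range[OF assms] by (auto simp: inversions_def)
  qed
  have "inj ?s"
    by (rule inj_on_inverseI[of _ ?s]) auto
  then have "inj_on ?s A" for A
    using inj_on_subset by blast
  then show ?thesis
    using card_inj_on_le[OF _ maps[of w]] card_inj_on_le[OF _ maps[of "w \<circ> stransp k"]]
      finite_inversions by (simp add: le_antisym)
qed

lemma perm_length_comp_stransp:
  assumes "1 \<le> k" "k < n"
  shows "perm_length n (w \<circ> stransp k) + (if w (Suc k) < w k then 1 else 0) =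
         perm_length n w + (if w k < w (Suc k) then 1 else 0)"
proof -
  have card_split: "card (inversions n v) =
      card (inversions n v - {(k, Suc k)}) + (if (k, Suc k) \<in> inversions n v then 1 else 0)" for v
    using finite_inversions[of n v] card_Suc_Diff1[of "inversions n v" "(k, Suc k)"]
    by (cases "(k, Suc k) \<in> inversions n v") simp_all
  have "(k, Suc k) \<in> inversions n v \<longleftrightarrow> v (Suc k) < v k" for v
    using assms by (auto simp: inversions_def)
  then show ?thesis
    unfolding perm_length_eq_card_inversions card_split[of "w \<circ> stransp k"] card_split[of w]
      card_inversions_comp_stransp[OF assms]
    by simp
qed

lemma perm_length_ascent:
  "1 \<le> k \<Longrightarrow> k < n \<Longrightarrow> w k < w (Suc k) \<Longrightarrow> perm_length n (w \<circ> stransp k) = perm_length n w + 1"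
  using perm_length_comp_stransp[of k n w] by simp

lemma perm_length_descent:
  "1 \<le> k \<Longrightarrow> k < n \<Longrightarrow> w (Suc k) < w k \<Longrightarrow> perm_length n (w \<circ> stransp k) + 1 = perm_length n w"
  using perm_length_comp_stransp[of k n w] by simp

lemma perm_length_comp_stransp_eq_iff:
  assumes "w permutes {1..n}" "1 \<le> k" "k < n"
  shows "perm_length n (w \<circ> stransp k) + 1 = perm_length n w \<longleftrightarrow> w (Suc k) < w k"
  using perm_length_ascent[OF assms(2,3), of w] perm_length_descent[OF assms(2,3), of w]
    permutes_apply_Suc_neq[OF assms(1), of k]
  by (cases "w k < w (Suc k)") auto

lemma no_descent_imp_id:
  assumes w: "w permutes {1..n}" and ascent: "\<And>k. 1 \<le> k \<Longrightarrow> k < n \<Longrightarrow> w k < w (Suc k)"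
  shows "w = id"
proof (rule ext)
  fix i
  have climb: "w i + d \<le> w (i + d)" if "1 \<le> i" "i + d \<le> n" for i d
    using that
  proof (induction d)
    case (Suc d)
    then show ?case
      using ascent[of "i + d"] by simp
  qed simp
  have range: "w j \<in> {1..n}" if "j \<in> {1..n}" for j
    using permutes_in_image[OF w] that by simp
  show "w i = id i"
  proof (cases "i \<in> {1..n}")
    case True
    then show ?thesis
      using climb[of i "n - i"] climb[of 1 "i - 1"] range[of 1] range[of n] by auto
  qed (simp add: permutes_not_in[OF w])
qed

lemma exists_descent:
  assumes "w permutes {1..n}" "w \<noteq> id"
  obtains k where "1 \<le> k" "k < n" "w (Suc k) < w k"
proof -
  obtain k where "1 \<le> k" "k < n" "\<not> w k < w (Suc k)"
    using no_descent_imp_id[OF assms(1)] assms(2) by blast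
  with permutes_apply_Suc_neq[OF assms(1), of k] that show thesis
    by (meson linorder_neqE_nat)
qed

lemma longest_longest [simp]: "longest n (longest n i) = i"
  by (cases "i \<in> {1..n}") (auto simp: longest_def)

lemma longest_permutes: "longest n permutes {1..n}"
  unfolding permutes_def
proof (intro conjI allI impI ex1I)
  show "longest n x = x" if "x \<notin> {1..n}" for x
    using that by (auto simp: longest_def)
  show "longest n (longest n y) = y" for y
    by simp
  show "x = longest n y" if "longest n x = y" for x y
    using that by auto
qed

lemma no_ascent_imp_longest:
  assumes w: "w permutes {1..n}" and descent: "\<And>k. 1 \<le> k \<Longrightarrow> k < n \<Longrightarrow> w (Suc k) < w k"
  shows "w = longest n"
proof -
  have "longest n \<circ> w = id"
  proof (rule no_descent_imp_id)
    show "longest n \<circ> w permutes {1..n}"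
      by (rule permutes_compose[OF w longest_permutes])
    fix k assume "1 \<le> k" "k < n"
    moreover have "w k \<in> {1..n}" "w (Suc k) \<in> {1..n}"
      using \<open>1 \<le> k\<close> \<open>k < n\<close> permutes_in_image[OF w] by auto
    ultimately show "(longest n \<circ> w) k < (longest n \<circ> w) (Suc k)"
      using descent[of k] by (auto simp: longest_def)
  qed
  then show ?thesis
    by (metis comp_apply id_apply longest_longest ext)
qed

section \<open>Schubert polynomials are well defined\<close>

lemma is_schubert_permutes: "is_schubert n w p \<Longrightarrow> w permutes {1..n}"
proof (induction rule: is_schubert.induct)
  case top
  show ?case by (rule longest_permutes)
next
  case (step w p i)
  then show ?case by (intro permutes_comp_stransp)
qed

lemma is_schubert_descent:
  assumes "is_schubert n w p" "1 \<le> i" "i < n" "w (Suc i) < w i"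
  shows "is_schubert n (w \<circ> stransp i) (divdiff i p)"
  using is_schubert.step[OF assms(1-3)] perm_length_descent[OF assms(2-4)] by simp

lemma is_schubert_ascent_cases:
  assumes "is_schubert n w p"
  obtains "w = longest n" "p = staircase n"
    | i p' where "1 \<le> i" "i < n" "w i < w (Suc i)" "is_schubert n (w \<circ> stransp i) p'"
        "p = divdiff i p'"
  using assms
proof cases
  case (step v p' i)
  have "v \<circ> stransp i = w \<circ> stransp i \<circ> stransp i"
    using step(1) by simp
  then have "v (Suc i) < v i"
    using step is_schubert_permutes perm_length_comp_stransp_eq_iff by blast
  with step show thesis
    using that(2)[of i p'] by (simp add: comp_def)
qed (use that in simp)

lemma is_schubert_exists: "w permutes {1..n} \<Longrightarrow> \<exists>p. is_schubert n w p"
proof (induction "n * n - perm_length n w" arbitrary: w rule: less_induct)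
  case less
  show ?case
  proof (cases "w = longest n")
    case True
    then show ?thesis using is_schubert.top by blast
  next
    case False
    then obtain k where k: "1 \<le> k" "k < n" "\<not> w (Suc k) < w k"
      using no_ascent_imp_longest[OF less.prems] by blast
    with permutes_apply_Suc_neq[OF less.prems] have ascent: "w k < w (Suc k)"
      by (meson linorder_neqE_nat)
    have "perm_length n (w \<circ> stransp k) = perm_length n w + 1"
      by (rule perm_length_ascent[OF k(1,2) ascent])
    with perm_length_le[of n "w \<circ> stransp k"]
    have "n * n - perm_length n (w \<circ> stransp k) < n * n - perm_length n w"
      by linarith
    then obtain p where "is_schubert n (w \<circ> stransp k) p"
      using less.hyps permutes_comp_stransp[OF less.prems k(1,2)] by blast
    from is_schubert_descent[OF this k(1,2)] ascent show ?thesis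
      by auto
  qed
qed

text \<open>The two ways of reaching \<open>v\<close> from \<open>v s\<^sub>i\<close> and from \<open>v s\<^sub>j\<close> meet above, at
  \<open>v s\<^sub>i s\<^sub>j = v s\<^sub>j s\<^sub>i\<close> or at \<open>v s\<^sub>i s\<^sub>i\<^sub>+\<^sub>1 s\<^sub>i = v s\<^sub>i\<^sub>+\<^sub>1 s\<^sub>i s\<^sub>i\<^sub>+\<^sub>1\<close>; the commutation
  and braid relations of divided differences close the diamond.\<close>
lemma is_schubert_diamond_commuting:
  assumes unique: "\<And>u p q. perm_length n u = Suc (perm_length n v) \<Longrightarrow>
      is_schubert n u p \<Longrightarrow> is_schubert n u q \<Longrightarrow> p = q"
    and v: "v permutes {1..n}" and ij: "1 \<le> i" "Suc i < j" "j < n"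
    and ascents: "v i < v (Suc i)" "v j < v (Suc j)"
    and p: "is_schubert n (v \<circ> stransp i) p" and q: "is_schubert n (v \<circ> stransp j) q"
  shows "divdiff i p = divdiff j q"
proof -
  let ?u = "v \<circ> stransp i \<circ> stransp j"
  have commute: "?u = v \<circ> stransp j \<circ> stransp i"
    using ij by (auto simp: stransp_commute)
  have "?u permutes {1..n}"
    using ij by (intro permutes_comp_stransp v) auto
  then obtain r where r: "is_schubert n ?u r"
    using is_schubert_exists by blast
  have "is_schubert n (?u \<circ> stransp j) (divdiff j r)"
    using ij ascents by (intro is_schubert_descent[OF r]) auto
  then have "p = divdiff j r"
    using ij ascents by (intro unique[OF _ p]) (simp_all add: perm_length_ascent)
  moreover have "is_schubert n (v \<circ> stransp j \<circ> stransp i \<circ> stransp i) (divdiff i r)"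
    using ij ascents r commute by (intro is_schubert_descent) auto
  then have "q = divdiff i r"
    using ij ascents by (intro unique[OF _ q]) (simp_all add: perm_length_ascent)
  ultimately show ?thesis
    using ij by (simp add: divdiff_commute)
qed

lemma is_schubert_diamond_braid:
  assumes unique: "\<And>u p q. perm_length n u = Suc (perm_length n v) \<Longrightarrow>
      is_schubert n u p \<Longrightarrow> is_schubert n u q \<Longrightarrow> p = q"
    and v: "v permutes {1..n}" and i: "1 \<le> i" "Suc i < n"
    and ascents: "v i < v (Suc i)" "v (Suc i) < v (Suc (Suc i))"
    and p: "is_schubert n (v \<circ> stransp i) p" and q: "is_schubert n (v \<circ> stransp (Suc i)) q"
  shows "divdiff i p = divdiff (Suc i) q"
proof -
  let ?u = "v \<circ> stransp i \<circ> stransp (Suc i) \<circ> stransp i"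
  have braid: "?u = v \<circ> stransp (Suc i) \<circ> stransp i \<circ> stransp (Suc i)"
    by (auto simp: stransp_braid)
  have "?u permutes {1..n}"
    using i by (intro permutes_comp_stransp v) auto
  then obtain r where r: "is_schubert n ?u r"
    using is_schubert_exists by blast
  have "is_schubert n (v \<circ> stransp i \<circ> stransp (Suc i)) (divdiff i r)"
    using is_schubert_descent[OF r, of i] i ascents by simp
  from is_schubert_descent[OF this, of "Suc i"]
  have "is_schubert n (v \<circ> stransp i) (divdiff (Suc i) (divdiff i r))"
    using i ascents by simp
  then have "p = divdiff (Suc i) (divdiff i r)"
    using i ascents by (intro unique[OF _ p]) (simp_all add: perm_length_ascent)
  moreover have "is_schubert n (v \<circ> stransp (Suc i) \<circ> stransp i) (divdiff (Suc i) r)"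
    using is_schubert_descent[OF r[unfolded braid], of "Suc i"] i ascents by simp
  from is_schubert_descent[OF this, of i]
  have "is_schubert n (v \<circ> stransp (Suc i)) (divdiff i (divdiff (Suc i) r))"
    using i ascents by simp
  then have "q = divdiff i (divdiff (Suc i) r)"
    using i ascents by (intro unique[OF _ q]) (simp_all add: perm_length_ascent)
  ultimately show ?thesis
    by (simp add: divdiff_braid)
qed

lemma is_schubert_diamond:
  assumes unique: "\<And>u p q. perm_length n u = Suc (perm_length n v) \<Longrightarrow>
      is_schubert n u p \<Longrightarrow> is_schubert n u q \<Longrightarrow> p = q"
    and v: "v permutes {1..n}" and ij: "1 \<le> i" "i \<le> j" "j < n"
    and ascents: "v i < v (Suc i)" "v j < v (Suc j)"
    and p: "is_schubert n (v \<circ> stransp i) p" and q: "is_schubert n (v \<circ> stransp j) q"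
  shows "divdiff i p = divdiff j q"
proof -
  consider "j = i" | "j = Suc i" | "Suc i < j"
    using ij(2) by linarith
  then show ?thesis
  proof cases
    case 1
    with ij ascents p q show ?thesis
      using unique[of "v \<circ> stransp i" p q] by (simp add: perm_length_ascent)
  next
    case 2
    with ij have "Suc i < n"
      by simp
    from unique ij(1) this ascents p q show ?thesis
      unfolding 2 by (rule is_schubert_diamond_braid[OF _ v])
  next
    case 3
    from unique ij(1) this ij(3) ascents p q show ?thesis
      by (rule is_schubert_diamond_commuting[OF _ v])
  qed
qed

lemma is_schubert_longest: "is_schubert n (longest n) p \<Longrightarrow> p = staircase n"
  by (cases rule: is_schubert_ascent_cases) (auto simp: longest_def)

theorem is_schubert_unique: "is_schubert n v p \<Longrightarrow> is_schubert n v q \<Longrightarrow> p = q"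
proof (induction "n * n - perm_length n v" arbitrary: v p q rule: less_induct)
  case less
  have v: "v permutes {1..n}"
    using is_schubert_permutes[OF less.prems(1)] .
  have unique: "p = q" if "perm_length n u = Suc (perm_length n v)"
    "is_schubert n u p" "is_schubert n u q" for u p q
    using less.hyps that perm_length_le[of n u] by (metis diff_less_mono2 lessI less_le_trans)
  from less.prems(1) show "p = q"
  proof (cases rule: is_schubert_ascent_cases)
    case 1
    then show ?thesis
      using is_schubert_longest less.prems(2) by simp
  next
    case (2 i p')
    note p_step = this
    from less.prems(2) show ?thesis
    proof (cases rule: is_schubert_ascent_cases)
      case 1
      then show ?thesis
        using is_schubert_longest less.prems(1) by simp
    next
      case (2 j q')
      note q_step = this
      have "divdiff i p' = divdiff j q'"
      proof (cases "i \<le> j")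
        case True
        show ?thesis
          by (rule is_schubert_diamond[OF _ v]) (use unique p_step q_step True in auto)
      next
        case False
        show ?thesis
          by (rule is_schubert_diamond[OF _ v, symmetric]) (use unique p_step q_step False in auto)
      qed
      with p_step q_step show ?thesis
        by simp
    qed
  qed
qed

lemma schubert_eqI: "is_schubert n w p \<Longrightarrow> schubert n w = p"
  unfolding schubert_def by (rule the_equality) (auto intro: is_schubert_unique)

lemma is_schubert_schubert: "w permutes {1..n} \<Longrightarrow> is_schubert n w (schubert n w)"
  using is_schubert_exists schubert_eqI by metis

lemma divdiff_schubert_descent:
  assumes "w permutes {1..n}" "1 \<le> i" "i < n" "w (Suc i) < w i"
  shows "divdiff i (schubert n w) = schubert n (w \<circ> stransp i)"
  by (rule schubert_eqI[symmetric], rule is_schubert_descent[OF is_schubert_schubert[OF assms(1)] assms(2-4)])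

lemma divdiff_schubert_ascent:
  assumes "w permutes {1..n}" "1 \<le> i" "i < n" "w i < w (Suc i)"
  shows "divdiff i (schubert n w) = 0"
proof -
  have "w \<circ> stransp i permutes {1..n}"
    by (rule permutes_comp_stransp[OF assms(1-3)])
  from is_schubert_descent[OF is_schubert_schubert[OF this] assms(2,3)] assms(4)
  have "schubert n w = divdiff i (schubert n (w \<circ> stransp i))"
    by (simp add: schubert_eqI)
  then show ?thesis
    by (simp add: divdiff_eq_0_iff)
qed

lemma var_power: "var i ^ e = monomial (Poly_Mapping.single i e)"
proof (induction e)
  case (Suc e)
  have "var i ^ Suc e = var i * monomial (Poly_Mapping.single i e)"
    by (simp add: Suc)
  also have "\<dots> = monomial (Poly_Mapping.single i (Suc e))"
    by (simp add: var_mult_monomial single_add[symmetric])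
  finally show ?case .
qed simp

lemma prod_monomial: "(\<Prod>i\<in>S. monomial (g i)) = monomial (\<Sum>i\<in>S. g i)"
  by (induction S rule: infinite_finite_induct) (simp_all add: mult_single)

definition staircase_exponent :: "nat \<Rightarrow> (nat \<Rightarrow>\<^sub>0 nat)" where
  "staircase_exponent n = (\<Sum>i\<in>{1..n}. Poly_Mapping.single i (n - i))"

lemma lookup_staircase_exponent:
  "lookup (staircase_exponent n) t = (if t \<in> {1..n} then n - t else 0)"
  unfolding staircase_exponent_def lookup_sum by (simp add: lookup_single when_def)

lemma staircase_eq_monomial: "staircase n = monomial (staircase_exponent n)"
  unfolding staircase_def staircase_exponent_def by (simp add: var_power prod_monomial)

definition below_staircase :: "nat \<Rightarrow> (nat \<Rightarrow>\<^sub>0 nat) \<Rightarrow> bool" where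
  "below_staircase n m \<longleftrightarrow> (\<forall>t. lookup m t \<le> n - t) \<and> lookup m 0 = 0"

lemma keys_below_staircase: "below_staircase n m \<Longrightarrow> keys m \<subseteq> {1..<n}"
proof
  fix t assume "below_staircase n m" "t \<in> keys m"
  then have "0 < lookup m t" "lookup m t \<le> n - t" "lookup m 0 = 0"
    by (auto simp: below_staircase_def in_keys_iff)
  then show "t \<in> {1..<n}"
    by (cases "t = 0") auto
qed

lemma total_degree_below_staircase:
  "below_staircase n m \<Longrightarrow> total_degree m = (\<Sum>t\<in>{1..n}. lookup m t)"
  by (rule total_degree_superset) (use keys_below_staircase[of n m] in auto)

lemma below_staircase_staircase_exponent: "below_staircase n (staircase_exponent n)"
  by (simp add: below_staircase_def lookup_staircase_exponent)

lemma total_degree_staircase_exponent: "total_degree (staircase_exponent n) = perm_length n (longest n)"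
proof -
  have "inversions n (longest n) = Sigma {1..n} (\<lambda>i. {i<..n})"
    by (auto simp: inversions_def longest_def)
  then have "perm_length n (longest n) = (\<Sum>i\<in>{1..n}. n - i)"
    by (simp add: perm_length_eq_card_inversions card_SigmaI)
  then show ?thesis
    by (simp add: total_degree_below_staircase[OF below_staircase_staircase_exponent]
        lookup_staircase_exponent)
qed

lemma below_staircase_update2:
  assumes "below_staircase n b" "1 \<le> i" "i < n"
    and "x + y + 1 = lookup b i + lookup b (Suc i)"
    and "x < max (lookup b i) (lookup b (Suc i))" "y < max (lookup b i) (lookup b (Suc i))"
  shows "below_staircase n (update2 b i x y)" "total_degree (update2 b i x y) + 1 = total_degree b"
proof -
  let ?c = "update2 b i x y"
  have b: "lookup b 0 = 0" "\<And>t. lookup b t \<le> n - t"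
    using assms(1) by (auto simp: below_staircase_def)
  have "max (lookup b i) (lookup b (Suc i)) \<le> n - i"
    using b(2)[of i] b(2)[of "Suc i"] by simp
  with assms(5,6) have "x \<le> n - i" "y \<le> n - Suc i"
    by linarith+
  then show c: "below_staircase n ?c"
    unfolding below_staircase_def lookup_update2 using b assms(2,3) by auto
  have split: "(\<Sum>t\<in>{1..n}. lookup m t) =
      lookup m i + lookup m (Suc i) + (\<Sum>t\<in>{1..n} - {i, Suc i}. lookup m t)"
    for m :: "nat \<Rightarrow>\<^sub>0 nat"
    using assms(2,3) sum.subset_diff[of "{i, Suc i}" "{1..n}" "lookup m"] by simp
  have "(\<Sum>t\<in>{1..n} - {i, Suc i}. lookup ?c t) = (\<Sum>t\<in>{1..n} - {i, Suc i}. lookup b t)"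
    by (rule sum.cong) (auto simp: lookup_update2)
  with assms(4) show "total_degree ?c + 1 = total_degree b"
    unfolding total_degree_below_staircase[OF c] total_degree_below_staircase[OF assms(1)] split
    by (simp add: lookup_update2)
qed

lemma is_schubert_monomials:
  "is_schubert n w p \<Longrightarrow> m \<in> keys p \<Longrightarrow> below_staircase n m \<and> total_degree m = perm_length n w"
proof (induction arbitrary: m rule: is_schubert.induct)
  case top
  then show ?case
    by (simp add: staircase_eq_monomial below_staircase_staircase_exponent total_degree_staircase_exponent)
next
  case (step w p i)
  from step.prems obtain b x y where b: "b \<in> keys p" "m = update2 b i x y"
    "x + y + 1 = lookup b i + lookup b (Suc i)"
    "x < max (lookup b i) (lookup b (Suc i))" "y < max (lookup b i) (lookup b (Suc i))"
    by (rule keys_divdiffE)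
  with step.IH[OF b(1)] have "below_staircase n m" "total_degree m + 1 = perm_length n w"
    using below_staircase_update2[OF _ step.hyps(2,3) b(3-5)] by auto
  with step.hyps(4) show ?case
    by (simp add: comp_def)
qed

lemma keys_schubert:
  "w permutes {1..n} \<Longrightarrow> m \<in> keys (schubert n w) \<Longrightarrow> keys m \<subseteq> {1..<n}"
  using is_schubert_monomials[OF is_schubert_schubert] keys_below_staircase by blast

lemma lookup_schubert_0:
  assumes "w permutes {1..n}" "w \<noteq> id"
  shows "lookup (schubert n w) 0 = 0"
proof (rule ccontr)
  obtain k where "1 \<le> k" "k < n" "w (Suc k) < w k"
    using exists_descent[OF assms] .
  then have "perm_length n w \<noteq> 0"
    using perm_length_descent by fastforce
  assume "lookup (schubert n w) 0 \<noteq> 0"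
  then have "0 \<in> keys (schubert n w)"
    by (simp add: in_keys_iff)
  from is_schubert_monomials[OF is_schubert_schubert[OF assms(1)] this] \<open>perm_length n w \<noteq> 0\<close>
  show False
    by simp
qed

text \<open>Applying \<open>\<partial>\<^sub>1, \<dots>, \<partial>\<^sub>m\<^sub>-\<^sub>1\<close> in turn to \<open>x\<^sub>1\<^sup>m\<^sup>-\<^sup>1 \<cdots> x\<^sub>m\<^sub>-\<^sub>1\<close> lowers the exponents of
  \<open>x\<^sub>1, \<dots>, x\<^sub>m\<^sub>-\<^sub>1\<close> by one each, every step dividing a single monomial; on the permutation
  side this turns the reversal of \<open>{1..m}\<close> into the reversal of \<open>{1..m-1}\<close>.\<close>
definition partial_reversal :: "nat \<Rightarrow> nat \<Rightarrow> nat \<Rightarrow> nat" where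
  "partial_reversal m t x =
    (if 1 \<le> x \<and> x \<le> t then m - x
     else if x = Suc t then m
     else if Suc (Suc t) \<le> x \<and> x \<le> m then Suc m - x
     else x)"

definition partial_staircase :: "nat \<Rightarrow> nat \<Rightarrow> (nat \<Rightarrow>\<^sub>0 nat)" where
  "partial_staircase m t = (\<Sum>x\<in>{1..m}. Poly_Mapping.single x (if x \<le> t then m - x - 1 else m - x))"

lemma lookup_partial_staircase:
  "lookup (partial_staircase m t) x = (if x \<in> {1..m} then (if x \<le> t then m - x - 1 else m - x) else 0)"
  unfolding partial_staircase_def lookup_sum by (simp add: lookup_single when_def)

lemma is_schubert_monomial_descent:
  assumes "is_schubert n w (monomial b)" "1 \<le> k" "k < n" "w (Suc k) < w k"
    and "lookup b k = Suc (lookup b (Suc k))"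
  shows "is_schubert n (w \<circ> stransp k) (monomial (update2 b k (lookup b (Suc k)) (lookup b (Suc k))))"
  using is_schubert_descent[OF assms(1-4)] divdiff_monomial_step[OF assms(5)] by simp

lemma partial_reversal_comp_stransp:
  "Suc t < m \<Longrightarrow> partial_reversal m t \<circ> stransp (Suc t) = partial_reversal m (Suc t)"
proof (rule ext)
  fix x assume "Suc t < m"
  then show "(partial_reversal m t \<circ> stransp (Suc t)) x = partial_reversal m (Suc t) x"
    by (cases "x = Suc t"; cases "x = Suc (Suc t)") (auto simp: partial_reversal_def)
qed

lemma partial_staircase_update2:
  assumes "Suc t < m"
  shows "update2 (partial_staircase m t) (Suc t) (lookup (partial_staircase m t) (Suc (Suc t)))
           (lookup (partial_staircase m t) (Suc (Suc t))) = partial_staircase m (Suc t)"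
  by (rule poly_mapping_eqI) (use assms in \<open>auto simp: lookup_update2 lookup_partial_staircase\<close>)

lemma is_schubert_partial_reversal_step:
  assumes "m \<le> n" "t < m" and "is_schubert n (partial_reversal m 0) (monomial (partial_staircase m 0))"
  shows "is_schubert n (partial_reversal m t) (monomial (partial_staircase m t))"
  using assms(2)
proof (induction t)
  case (Suc t)
  have "is_schubert n (partial_reversal m t \<circ> stransp (Suc t))
      (monomial (update2 (partial_staircase m t) (Suc t)
        (lookup (partial_staircase m t) (Suc (Suc t))) (lookup (partial_staircase m t) (Suc (Suc t)))))"
  proof (rule is_schubert_monomial_descent)
    show "partial_reversal m t (Suc (Suc t)) < partial_reversal m t (Suc t)"
      using Suc.prems by (simp add: partial_reversal_def)
    show "lookup (partial_staircase m t) (Suc t) = Suc (lookup (partial_staircase m t) (Suc (Suc t)))"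
      using Suc.prems by (simp add: lookup_partial_staircase)
  qed (use Suc assms(1) in simp_all)
  then show ?case
    using Suc.prems by (simp add: partial_reversal_comp_stransp partial_staircase_update2)
qed (use assms(3) in simp)

lemma partial_reversal_0: "1 \<le> n \<Longrightarrow> partial_reversal n 0 = longest n"
  by (rule ext) (auto simp: partial_reversal_def longest_def)

lemma partial_staircase_0: "partial_staircase n 0 = staircase_exponent n"
  by (rule poly_mapping_eqI) (simp add: lookup_partial_staircase lookup_staircase_exponent)

lemma partial_reversal_last: "2 \<le> m \<Longrightarrow> partial_reversal m (m - 1) = partial_reversal (m - 1) 0"
  by (rule ext) (auto simp: partial_reversal_def)

lemma partial_staircase_last: "2 \<le> m \<Longrightarrow> partial_staircase m (m - 1) = partial_staircase (m - 1) 0"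
  by (rule poly_mapping_eqI) (auto simp: lookup_partial_staircase)

lemma is_schubert_partial_reversal:
  assumes "1 \<le> n" "k < n"
  shows "is_schubert n (partial_reversal (n - k) 0) (monomial (partial_staircase (n - k) 0))"
  using assms(2)
proof (induction k)
  case 0
  show ?case
    unfolding diff_zero partial_reversal_0[OF assms(1)] partial_staircase_0 staircase_eq_monomial[symmetric]
    by (rule is_schubert.top)
next
  case (Suc k)
  have two_le: "2 \<le> n - k"
    using Suc.prems by simp
  have "is_schubert n (partial_reversal (n - k) 0) (monomial (partial_staircase (n - k) 0))"
    using Suc.IH Suc.prems by simp
  from is_schubert_partial_reversal_step[OF _ _ this, of "n - k - 1"] two_le
  have "is_schubert n (partial_reversal (n - k) (n - k - 1))
      (monomial (partial_staircase (n - k) (n - k - 1)))"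
    by simp
  then have "is_schubert n (partial_reversal (n - k - 1) 0) (monomial (partial_staircase (n - k - 1) 0))"
    unfolding partial_reversal_last[OF two_le] partial_staircase_last[OF two_le] .
  moreover have "n - Suc k = n - k - 1"
    by simp
  ultimately show ?case
    by (simp only:)
qed

lemma schubert_id:
  assumes "1 \<le> n"
  shows "schubert n id = 1"
proof -
  have "n - (n - 1) = 1"
    using assms by simp
  with is_schubert_partial_reversal[OF assms, of "n - 1"] assms
  have "is_schubert n (partial_reversal 1 0) (monomial (partial_staircase 1 0))"
    by simp
  moreover have "partial_reversal 1 0 = id"
    by (rule ext) (auto simp: partial_reversal_def)
  moreover have "partial_staircase 1 0 = 0"
    by (rule poly_mapping_eqI) (auto simp: lookup_partial_staircase)
  ultimately show ?thesis
    by (simp add: schubert_eqI)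
qed

section \<open>Avoiding 321 and 231\<close>

definition avoids_321_231 :: "nat \<Rightarrow> (nat \<Rightarrow> nat) \<Rightarrow> bool" where
  "avoids_321_231 n w \<longleftrightarrow>
    (\<forall>p q r. 1 \<le> p \<and> p < q \<and> q < r \<and> r \<le> n \<longrightarrow> \<not> (w r < w p \<and> w r < w q))"

lemma avoids_321_231I:
  "(\<And>p q r. 1 \<le> p \<Longrightarrow> p < q \<Longrightarrow> q < r \<Longrightarrow> r \<le> n \<Longrightarrow>
      w r < w p \<Longrightarrow> w r < w q \<Longrightarrow> False)
   \<Longrightarrow> avoids_321_231 n w"
  unfolding avoids_321_231_def by blast

lemma avoids_321_231D:
  "avoids_321_231 n w \<Longrightarrow> 1 \<le> p \<Longrightarrow> p < q \<Longrightarrow> q < r \<Longrightarrow> r \<le> n \<Longrightarrow>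
    w r < w p \<Longrightarrow> w r < w q \<Longrightarrow> False"
  unfolding avoids_321_231_def by blast

lemma avoids_321_231E:
  assumes "avoids_321_231 n w" "p \<noteq> q" "1 \<le> p" "1 \<le> q" "p < r" "q < r" "r \<le> n"
    and "w r < w p" "w r < w q"
  shows False
proof (cases "p < q")
  case True
  then show False by (rule avoids_321_231D[OF assms(1,3) _ assms(6,7,8,9)])
next
  case False
  with assms(2) have "q < p" by simp
  then show False by (rule avoids_321_231D[OF assms(1,4) _ assms(5,7,9,8)])
qed

lemma avoids_321_231_not_contains:
  assumes avoids: "avoids_321_231 n w" and l: "length l = 3" "l ! 2 < l ! 0" "l ! 2 < l ! 1"
  shows "\<not> contains_pattern n w l"
proof
  assume "contains_pattern n w l"
  then obtain idx where idx: "\<forall>a b. a < b \<and> b < length l \<longrightarrow> idx a < idx b"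
    "\<forall>a < length l. idx a \<in> {1..n}"
    "\<forall>a < length l. \<forall>b < length l. (w (idx a) < w (idx b) \<longleftrightarrow> l ! a < l ! b)"
    unfolding contains_pattern_def by blast
  have "1 \<le> idx 0" "idx 0 < idx 1" "idx 1 < idx 2" "idx 2 \<le> n"
    using idx l(1) by auto
  moreover have "w (idx 2) < w (idx 0)" "w (idx 2) < w (idx 1)"
    using idx(3) l by auto
  ultimately show False
    by (rule avoids_321_231D[OF avoids])
qed

lemma contains_321_or_231:
  assumes w: "w permutes {1..n}" and pqr: "1 \<le> p" "p < q" "q < r" "r \<le> n"
    and smaller: "w r < w p" "w r < w q"
  shows "contains_pattern n w [3,2,1] \<or> contains_pattern n w [2,3,1]"
proof -
  define idx where "idx a = (if a = 0 then p else if a = 1 then q else r)" for a :: nat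
  have less_3: "(\<forall>a<3. P a) \<longleftrightarrow> P 0 \<and> P 1 \<and> P 2" for P :: "nat \<Rightarrow> bool"
    by (auto simp: numeral_3_eq_3 less_Suc_eq numeral_2_eq_2)
  have mono: "\<forall>a b. a < b \<and> b < 3 \<longrightarrow> idx a < idx b"
    using pqr by (auto simp: idx_def numeral_3_eq_3 less_Suc_eq)
  have range: "\<forall>a<3. idx a \<in> {1..n}"
    using pqr by (auto simp: idx_def less_3)
  have "w p \<noteq> w q"
    using permutes_inj[OF w] pqr(2) by (auto dest: injD)
  then consider "w q < w p" | "w p < w q"
    by linarith
  then show ?thesis
  proof cases
    case 1
    have "contains_pattern n w [3,2,1]"
      unfolding contains_pattern_def
      by (rule exI[of _ idx]) (use mono range 1 smaller in \<open>auto simp: less_3 idx_def\<close>)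
    then show ?thesis ..
  next
    case 2
    have "contains_pattern n w [2,3,1]"
      unfolding contains_pattern_def
      by (rule exI[of _ idx]) (use mono range 2 smaller in \<open>auto simp: less_3 idx_def\<close>)
    then show ?thesis ..
  qed
qed

lemma avoids_321_231_iff_not_contains:
  assumes "w permutes {1..n}"
  shows "avoids_321_231 n w \<longleftrightarrow> \<not> contains_pattern n w [3,2,1] \<and> \<not> contains_pattern n w [2,3,1]"
  using avoids_321_231_not_contains[of n w "[3,2,1]"] avoids_321_231_not_contains[of n w "[2,3,1]"]
    contains_321_or_231[OF assms] avoids_321_231I[of n w]
  by auto

definition lehmer_code :: "nat \<Rightarrow> (nat \<Rightarrow> nat) \<Rightarrow> nat \<Rightarrow> nat" where
  "lehmer_code n w i = card {j. i < j \<and> j \<le> n \<and> w j < w i}"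

lemma finite_lehmer_set: "finite {j::nat. i < j \<and> j \<le> n \<and> P j}"
  by (rule finite_subset[of _ "{..n}"]) auto

lemma lehmer_code_eq_0_iff: "lehmer_code n w i = 0 \<longleftrightarrow> (\<forall>j. i < j \<and> j \<le> n \<longrightarrow> \<not> w j < w i)"
  unfolding lehmer_code_def using finite_lehmer_set[of i n "\<lambda>j. w j < w i"] by auto

lemma lehmer_code_id [simp]: "lehmer_code n id i = 0"
  by (simp add: lehmer_code_eq_0_iff)

lemma lehmer_code_beyond: "n \<le> i \<Longrightarrow> lehmer_code n w i = 0"
  by (simp add: lehmer_code_eq_0_iff)

lemma lehmer_code_descent_pos:
  assumes "k < n" "w (Suc k) < w k"
  shows "lehmer_code n w k \<noteq> 0"
  using assms unfolding lehmer_code_eq_0_iff by (metis Suc_leI lessI)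

lemma lehmer_code_ascent:
  assumes "avoids_321_231 n w" "1 \<le> k" "w k < w (Suc k)"
  shows "lehmer_code n w k = 0"
  unfolding lehmer_code_eq_0_iff
proof (intro allI impI notI)
  fix j assume j: "k < j \<and> j \<le> n" and smaller: "w j < w k"
  with assms(3) have "Suc k < j"
    by (metis Suc_lessI less_asym)
  with j assms(2,3) smaller show False
    by (intro avoids_321_231D[OF assms(1), of k "Suc k" j]) simp_all
qed

lemma lehmer_code_Suc_descent:
  assumes "avoids_321_231 n w" "1 \<le> k" "w (Suc k) < w k"
  shows "lehmer_code n w (Suc k) = 0"
  unfolding lehmer_code_eq_0_iff
proof (intro allI impI notI)
  fix j assume "Suc k < j \<and> j \<le> n" "w j < w (Suc k)"
  with assms(2,3) show False
    by (intro avoids_321_231D[OF assms(1), of k "Suc k" j]) simp_all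
qed

lemma lehmer_code_comp_stransp:
  assumes "1 \<le> k" "k < n" "w (Suc k) < w k"
  shows "lehmer_code n (w \<circ> stransp k) i =
    (if i = k then lehmer_code n w (Suc k) else if i = Suc k then lehmer_code n w k - 1
     else lehmer_code n w i)"
proof -
  let ?S = "\<lambda>v i. {j. i < j \<and> j \<le> n \<and> v j < v i}"
  consider "i = k" | "i = Suc k" | "i < k" | "Suc k < i"
    by linarith
  then show ?thesis
  proof cases
    case 1
    have "?S (w \<circ> stransp k) i = ?S w (Suc k)"
      using 1 assms(3) by (auto simp: stransp_apply split: if_splits)
    then show ?thesis using 1 by (simp add: lehmer_code_def)
  next
    case 2
    have "?S (w \<circ> stransp k) i = ?S w k - {Suc k}"
      using 2 by (auto simp: stransp_apply)
    moreover have "Suc k \<in> ?S w k"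
      using assms by simp
    ultimately show ?thesis
      using 2 finite_lehmer_set[of k n "\<lambda>j. w j < w k"] by (simp add: lehmer_code_def)
  next
    case 3
    have "?S (w \<circ> stransp k) i = stransp k ` ?S w i"
    proof (rule set_eqI)
      fix j
      have "j \<in> ?S (w \<circ> stransp k) i \<longleftrightarrow> stransp k j \<in> ?S w i"
        using 3 assms(2) by (auto simp: stransp_apply)
      also have "\<dots> \<longleftrightarrow> j \<in> stransp k ` ?S w i"
        by (metis (no_types, lifting) image_iff stransp_stransp)
      finally show "j \<in> ?S (w \<circ> stransp k) i \<longleftrightarrow> j \<in> stransp k ` ?S w i" .
    qed
    moreover have "card (stransp k ` ?S w i) = card (?S w i)"
      by (rule card_image) (rule inj_on_subset[OF inj_stransp subset_UNIV])
    ultimately show ?thesis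
      using 3 by (simp add: lehmer_code_def)
  next
    case 4
    then have "?S (w \<circ> stransp k) i = ?S w i"
      by auto
    then show ?thesis
      using 4 by (simp add: lehmer_code_def)
  qed
qed

lemma avoids_321_231_comp_stransp:
  assumes avoids: "avoids_321_231 n w" and k: "1 \<le> k" "k < n" and descent: "w (Suc k) < w k"
  shows "avoids_321_231 n (w \<circ> stransp k)"
proof (rule avoids_321_231I)
  fix p q r
  assume pqr: "1 \<le> p" "p < q" "q < r" "r \<le> n"
    and smaller: "(w \<circ> stransp k) r < (w \<circ> stransp k) p" "(w \<circ> stransp k) r < (w \<circ> stransp k) q"
  have "(p, r) \<noteq> (k, Suc k)" "(q, r) \<noteq> (k, Suc k)"
    using smaller descent by auto
  then have "stransp k p < stransp k r" "stransp k q < stransp k r"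
    using pqr by (auto intro: stransp_less_stransp)
  moreover have "stransp k p \<noteq> stransp k q"
    using pqr(2) by (metis less_irrefl stransp_stransp)
  moreover have "stransp k p \<in> {1..n}" "stransp k q \<in> {1..n}" "stransp k r \<in> {1..n}"
    using stransp_in_range[OF k] pqr by auto
  ultimately show False
    using smaller by (intro avoids_321_231E[OF avoids, of "stransp k p" "stransp k q" "stransp k r"]) auto
qed

definition fixes_below :: "nat \<Rightarrow> (nat \<Rightarrow> nat) \<Rightarrow> bool" where
  "fixes_below k w \<longleftrightarrow> (\<forall>i. 1 \<le> i \<and> i < k \<longrightarrow> w i = i)"

lemma fixes_below_imp_ge:
  assumes w: "w permutes {1..n}" and fixed: "fixes_below k w" and x: "k \<le> x" "x \<in> {1..n}"
  shows "k \<le> w x"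
proof (rule ccontr)
  assume "\<not> k \<le> w x"
  moreover have "w x \<in> {1..n}"
    using permutes_in_image[OF w] x(2) by simp
  ultimately have "w (w x) = w x"
    using fixed unfolding fixes_below_def by auto
  then have "w x = x"
    using permutes_inj[OF w] by (auto dest: injD)
  with \<open>\<not> k \<le> w x\<close> x(1) show False
    by simp
qed

lemma fixes_below_comp_stransp: "fixes_below k (w \<circ> stransp k) \<longleftrightarrow> fixes_below k w"
  by (simp add: fixes_below_def)

lemma avoids_321_231_of_comp_stransp:
  assumes w: "w permutes {1..n}" and k: "1 \<le> k" "k < n"
    and avoids: "avoids_321_231 n (w \<circ> stransp k)" and fixed: "fixes_below k w"
  shows "avoids_321_231 n w"
proof (rule avoids_321_231I)
  let ?v = "w \<circ> stransp k"
  have fixes_v: "fixes_below k ?v"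
    using fixed by (simp add: fixes_below_comp_stransp)
  have large: "k \<le> w k" "k \<le> w (Suc k)"
    using fixes_below_imp_ge[OF permutes_comp_stransp[OF w k] fixes_v, of "Suc k"]
      fixes_below_imp_ge[OF permutes_comp_stransp[OF w k] fixes_v, of k] k by auto
  fix p q r
  assume pqr: "1 \<le> p" "p < q" "q < r" "r \<le> n" and smaller: "w r < w p" "w r < w q"
  consider "r \<le> Suc k" | "Suc k < r"
    by linarith
  then show False
  proof cases
    case 1
    then have "w p = p" "p < k"
      using fixed pqr unfolding fixes_below_def by auto
    moreover have "r < k \<Longrightarrow> w r = r"
      using fixed pqr unfolding fixes_below_def by auto
    ultimately show False
      using 1 pqr smaller large by (cases "r < k") (auto simp: le_Suc_eq)
  next
    case 2
    then have "stransp k r = r" "stransp k p < r" "stransp k q < r"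
      using pqr by (auto simp: stransp_apply)
    moreover have "stransp k p \<noteq> stransp k q"
      using pqr(2) by (metis less_irrefl stransp_stransp)
    moreover have "1 \<le> stransp k p" "1 \<le> stransp k q"
      using pqr k by (auto simp: stransp_apply)
    ultimately show False
      using smaller pqr(4)
      by (intro avoids_321_231E[OF avoids, of "stransp k p" "stransp k q" r]) auto
  qed
qed

definition hcomp_prod :: "nat \<Rightarrow> (nat \<Rightarrow> nat) \<Rightarrow> mpoly" where
  "hcomp_prod n c = (\<Prod>i\<in>{1..<n}. hcomp i (c i))"

lemma chm_eq_hcomp_prod: "chm (map c [1..<n]) = hcomp_prod n c"
proof -
  have "chm (map c [1..<n]) = (\<Prod>k<n - 1. hcomp (Suc k) (c (Suc k)))"
    unfolding chm_def by (rule prod.cong) (auto simp: nth_upt)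
  also have "\<dots> = (\<Prod>i\<in>Suc ` {..<n - 1}. hcomp i (c i))"
    by (subst prod.reindex) auto
  also have "Suc ` {..<n - 1} = {1..<n}"
  proof
    show "{1..<n} \<subseteq> Suc ` {..<n - 1}"
    proof
      fix x assume "x \<in> {1..<n}"
      then have "x - 1 \<in> {..<n - 1}" "x = Suc (x - 1)"
        by auto
      then show "x \<in> Suc ` {..<n - 1}"
        by blast
    qed
  qed auto
  finally show ?thesis
    unfolding hcomp_prod_def .
qed

lemma hcomp_prod_0 [simp]: "hcomp_prod n (\<lambda>_. 0) = 1"
  by (simp add: hcomp_prod_def)

lemma swap_poly_hcomp_prod:
  assumes "1 \<le> k" "c k = 0"
  shows "swap_poly k (hcomp_prod n c) = hcomp_prod n c"
  unfolding hcomp_prod_def swap_poly_prod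
proof (rule prod.cong)
  fix x
  show "swap_poly k (hcomp x (c x)) = hcomp x (c x)"
    using assms by (cases "x = k") (simp_all add: swap_poly_hcomp)
qed simp

lemma divdiff_hcomp_prod:
  assumes k: "1 \<le> k" "k < n" and ck: "c k \<noteq> 0" and c_Suc: "Suc k < n \<Longrightarrow> c (Suc k) = 0"
    and c_last: "Suc k = n \<Longrightarrow> c k = 1"
  shows "divdiff k (hcomp_prod n c) =
    hcomp_prod n (\<lambda>i. if i = k then 0 else if i = Suc k then c k - 1 else c i)"
    (is "_ = hcomp_prod n ?c'")
proof -
  let ?A = "{1..<n} - {k}"
  have k_in: "k \<in> {1..<n}"
    using k by simp
  have rest_symmetric: "swap_poly k (\<Prod>i\<in>?A. hcomp i (c i)) = (\<Prod>i\<in>?A. hcomp i (c i))"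
    unfolding swap_poly_prod by (rule prod.cong) (use k in \<open>auto simp: swap_poly_hcomp\<close>)
  have "hcomp_prod n c = hcomp k (c k) * (\<Prod>i\<in>?A. hcomp i (c i))"
    unfolding hcomp_prod_def by (rule prod.remove[OF _ k_in]) simp
  then have "divdiff k (hcomp_prod n c) = divdiff k (hcomp k (c k)) * (\<Prod>i\<in>?A. hcomp i (c i))"
    by (simp only: divdiff_mult_symmetric[OF rest_symmetric])
  also have "\<dots> = hcomp (Suc k) (c k - 1) * (\<Prod>i\<in>?A. hcomp i (c i))"
    using divdiff_hcomp[OF k(1) ck] by simp
  also have "\<dots> = (\<Prod>i\<in>?A. hcomp i (?c' i))"
  proof (cases "Suc k < n")
    case True
    then have Suc_k_in: "Suc k \<in> ?A"
      by simp
    have "(\<Prod>i\<in>?A. hcomp i (c i)) = hcomp (Suc k) (c (Suc k)) * (\<Prod>i\<in>?A - {Suc k}. hcomp i (c i))"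
      by (rule prod.remove[OF _ Suc_k_in]) simp
    moreover have "(\<Prod>i\<in>?A. hcomp i (?c' i)) = hcomp (Suc k) (c k - 1) * (\<Prod>i\<in>?A - {Suc k}. hcomp i (?c' i))"
      by (subst prod.remove[OF _ Suc_k_in]) simp_all
    moreover have "(\<Prod>i\<in>?A - {Suc k}. hcomp i (?c' i)) = (\<Prod>i\<in>?A - {Suc k}. hcomp i (c i))"
      by (rule prod.cong) auto
    ultimately show ?thesis
      using c_Suc[OF True] by simp
  next
    case False
    with k have "Suc k = n"
      by simp
    moreover have "(\<Prod>i\<in>?A. hcomp i (?c' i)) = (\<Prod>i\<in>?A. hcomp i (c i))"
      by (rule prod.cong) (use \<open>Suc k = n\<close> in auto)
    ultimately show ?thesis
      using c_last by simp
  qed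
  also have "\<dots> = hcomp_prod n ?c'"
    unfolding hcomp_prod_def by (subst prod.remove[OF _ k_in]) simp_all
  finally show ?thesis .
qed

lemma keys_prod_subset:
  assumes "\<And>i m. i \<in> A \<Longrightarrow> m \<in> keys (f i) \<Longrightarrow> keys m \<subseteq> B"
  shows "m \<in> keys (prod f A) \<Longrightarrow> keys m \<subseteq> B"
  using assms
proof (induction A arbitrary: m rule: infinite_finite_induct)
  case (insert x F)
  then have "m \<in> keys (f x * prod f F)"
    by simp
  then obtain a b where "m = a + b" "a \<in> keys (f x)" "b \<in> keys (prod f F)"
    using keys_mult by blast
  with insert show ?case
    using keys_add[of a b] by blast
qed auto

lemma keys_hcomp_prod: "m \<in> keys (hcomp_prod n c) \<Longrightarrow> keys m \<subseteq> {1..<n}"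
  unfolding hcomp_prod_def
proof (rule keys_prod_subset)
  fix i m' assume "i \<in> {1..<n}" "m' \<in> keys (hcomp i (c i))"
  then show "keys m' \<subseteq> {1..<n}"
    using keys_hcomp[of m' i "c i"] by auto
qed

lemma lookup_hcomp_prod_0:
  assumes "i \<in> {1..<n}" "c i \<noteq> 0"
  shows "lookup (hcomp_prod n c) 0 = 0"
proof -
  have "lookup (hcomp_prod n c) 0 = (\<Prod>i\<in>{1..<n}. lookup (hcomp i (c i)) 0)"
    unfolding eval_mpoly_zero_point[symmetric] hcomp_prod_def eval_mpoly_prod ..
  also have "\<dots> = 0"
    using assms by (subst prod_zero_iff) (auto simp: lookup_hcomp_0 intro!: bexI[of _ i])
  finally show ?thesis .
qed

section \<open>Schubert polynomials of permutations avoiding 321 and 231\<close>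

lemma divdiff_hcomp_prod_lehmer_code:
  assumes avoids: "avoids_321_231 n w" and k: "1 \<le> k" "k < n" and descent: "w (Suc k) < w k"
  shows "divdiff k (hcomp_prod n (lehmer_code n w)) = hcomp_prod n (lehmer_code n (w \<circ> stransp k))"
proof -
  have code_Suc: "lehmer_code n w (Suc k) = 0"
    by (rule lehmer_code_Suc_descent[OF avoids k(1) descent])
  have code_swap: "lehmer_code n (w \<circ> stransp k) =
      (\<lambda>i. if i = k then 0 else if i = Suc k then lehmer_code n w k - 1 else lehmer_code n w i)"
    by (rule ext) (simp add: lehmer_code_comp_stransp[OF k descent] code_Suc)
  have "lehmer_code n w k = 1" if "Suc k = n"
    using lehmer_code_comp_stransp[OF k descent, of "Suc k"] lehmer_code_beyond[of n "Suc k"]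
      lehmer_code_descent_pos[OF k(2) descent] that
    by simp
  then show ?thesis
    unfolding code_swap
    by (intro divdiff_hcomp_prod k lehmer_code_descent_pos[OF k(2) descent] code_Suc)
qed

lemma divdiff_hcomp_prod_lehmer_code_ascent:
  assumes "avoids_321_231 n w" "1 \<le> k" "w k < w (Suc k)"
  shows "divdiff k (hcomp_prod n (lehmer_code n w)) = 0"
  using swap_poly_hcomp_prod[of k "lehmer_code n w", OF assms(2) lehmer_code_ascent[OF assms]]
  by (simp add: divdiff_eq_0_iff)

lemma lookup_hcomp_prod_lehmer_code_0:
  assumes "w permutes {1..n}" "w \<noteq> id"
  shows "lookup (hcomp_prod n (lehmer_code n w)) 0 = 0"
proof -
  obtain k where "1 \<le> k" "k < n" "w (Suc k) < w k"
    using exists_descent[OF assms] .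
  then show ?thesis
    using lehmer_code_descent_pos by (intro lookup_hcomp_prod_0[of k]) auto
qed

theorem schubert_eq_hcomp_prod_lehmer_code:
  assumes n: "1 \<le> n" and w: "w permutes {1..n}" and avoids: "avoids_321_231 n w"
  shows "schubert n w = hcomp_prod n (lehmer_code n w)"
  using w avoids
proof (induction "perm_length n w" arbitrary: w rule: less_induct)
  case less
  note w = less.prems(1) and avoids = less.prems(2)
  show ?case
  proof (cases "w = id")
    case True
    then show ?thesis
      using schubert_id[OF n] by (simp add: lehmer_code_id[abs_def])
  next
    case False
    show ?thesis
    proof (rule mpoly_eqI_by_divdiff)
      show "divdiff k (schubert n w) = divdiff k (hcomp_prod n (lehmer_code n w))"
        if k: "1 \<le> k" "k < n" for k
      proof (cases "w k < w (Suc k)")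
        case True
        then show ?thesis
          using divdiff_schubert_ascent[OF w k] divdiff_hcomp_prod_lehmer_code_ascent[OF avoids k(1)]
          by simp
      next
        case False
        with permutes_apply_Suc_neq[OF w, of k] have descent: "w (Suc k) < w k"
          by simp
        have "schubert n (w \<circ> stransp k) = hcomp_prod n (lehmer_code n (w \<circ> stransp k))"
          using perm_length_descent[OF k descent]
          by (intro less.hyps permutes_comp_stransp[OF w k] avoids_321_231_comp_stransp[OF avoids k descent])
            simp
        then show ?thesis
          by (simp add: divdiff_schubert_descent[OF w k descent] divdiff_hcomp_prod_lehmer_code[OF avoids k descent])
      qed
    qed (use keys_schubert[OF w] keys_hcomp_prod lookup_schubert_0[OF w False]
          lookup_hcomp_prod_lehmer_code_0[OF w False] in auto)
  qed
qed

section \<open>Evaluation of Schubert polynomials at unit vectors\<close>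

lemma fixes_below_mono: "fixes_below k w \<Longrightarrow> j \<le> k \<Longrightarrow> fixes_below j w"
  by (simp add: fixes_below_def)

lemma fixes_below_descent_moved:
  assumes w: "w permutes {1..n}" and k: "k < n" and fixed: "fixes_below k w"
    and descent: "w (Suc k) < w k"
  shows "w k \<noteq> k"
proof -
  have "k \<le> w (Suc k)"
    by (rule fixes_below_imp_ge[OF w fixed]) (use k in auto)
  with descent show ?thesis
    by simp
qed

lemma first_moved_is_descent:
  assumes w: "w permutes {1..n}" and avoids: "avoids_321_231 n w"
    and k: "1 \<le> k" and fixed: "fixes_below k w" and moved: "w k \<noteq> k"
  shows "k < n" "w (Suc k) < w k"
proof -
  have k_range: "k \<in> {1..n}"
  proof (rule ccontr)
    assume "k \<notin> {1..n}"
    with permutes_not_in[OF w] moved show False by simp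
  qed
  have "k \<le> w k"
    by (rule fixes_below_imp_ge[OF w fixed order.refl k_range])
  with moved have "k < w k"
    by simp
  have "k \<in> w ` {1..n}"
    using permutes_image[OF w] k_range by simp
  then obtain y where y: "y \<in> {1..n}" "w y = k"
    by blast
  have "y \<noteq> k"
    using y moved by auto
  moreover have "\<not> y < k"
  proof
    assume "y < k"
    with fixed y(1) have "w y = y"
      unfolding fixes_below_def by simp
    with y(2) \<open>y < k\<close> show False
      by simp
  qed
  ultimately have "k < y"
    by simp
  with y show "k < n"
    by simp
  show "w (Suc k) < w k"
  proof (rule ccontr)
    assume "\<not> w (Suc k) < w k"
    with permutes_apply_Suc_neq[OF w, of k] have "w k < w (Suc k)"
      by simp
    then have "lehmer_code n w k = 0"
      by (rule lehmer_code_ascent[OF avoids k])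
    then have "\<not> w y < w k"
      using \<open>k < y\<close> y(1) unfolding lehmer_code_eq_0_iff by simp
    with y(2) \<open>k < w k\<close> show False
      by simp
  qed
qed

lemma exists_first_moved:
  assumes "w permutes {1..n}" "w \<noteq> id"
  obtains k where "1 \<le> k" "fixes_below k w" "w k \<noteq> k"
proof -
  obtain x where "w x \<noteq> x"
    using assms(2) by (auto simp: fun_eq_iff)
  moreover from this have "1 \<le> x"
    using permutes_not_in[OF assms(1), of x] by (cases x) auto
  ultimately have ex: "\<exists>x. 1 \<le> x \<and> w x \<noteq> x"
    by blast
  define k where "k = (LEAST x. 1 \<le> x \<and> w x \<noteq> x)"
  have "1 \<le> k" "w k \<noteq> k"
    using LeastI_ex[OF ex] unfolding k_def by auto
  moreover have "fixes_below k w"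
    unfolding fixes_below_def
  proof (intro allI impI)
    fix i assume i: "1 \<le> i \<and> i < k"
    then have "\<not> (1 \<le> i \<and> w i \<noteq> i)"
      unfolding k_def by (intro not_less_Least) simp
    with i show "w i = i"
      by simp
  qed
  ultimately show thesis
    using that by blast
qed

lemma first_moved_unique:
  assumes "1 \<le> k" "fixes_below k w" "w k \<noteq> k" and "1 \<le> k'" "fixes_below k' w" "w k' \<noteq> k'"
  shows "k = k'"
  using assms unfolding fixes_below_def by (metis linorder_neqE_nat)

lemma card_contributing_descents:
  assumes w: "w permutes {1..n}" "w \<noteq> id" and j: "1 \<le> j"
  shows "card {k\<in>{j..<n}. w (Suc k) < w k \<and> avoids_321_231 n (w \<circ> stransp k) \<and> fixes_below k w} =
    (if avoids_321_231 n w \<and> fixes_below j w then 1 else 0)"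
    (is "card ?K = _")
proof (cases "avoids_321_231 n w \<and> fixes_below j w")
  case True
  obtain k0 where k0: "1 \<le> k0" "fixes_below k0 w" "w k0 \<noteq> k0"
    using exists_first_moved[OF w] .
  have "j \<le> k0"
  proof (rule ccontr)
    assume "\<not> j \<le> k0"
    with True k0 show False
      unfolding fixes_below_def by simp
  qed
  moreover have "k0 < n" "w (Suc k0) < w k0"
    using first_moved_is_descent[OF w(1) _ k0] True by auto
  moreover from this have "avoids_321_231 n (w \<circ> stransp k0)"
    using True k0(1) by (intro avoids_321_231_comp_stransp) auto
  ultimately have "k0 \<in> ?K"
    using k0(2) by simp
  moreover have "k = k0" if "k \<in> ?K" for k
    using that j k0 fixes_below_descent_moved[OF w(1)] by (intro first_moved_unique) auto
  ultimately have "?K = {k0}"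
    by blast
  with True show ?thesis
    by simp
next
  case False
  have "?K = {}"
  proof (rule ccontr)
    assume "?K \<noteq> {}"
    then obtain k where k: "j \<le> k" "k < n" "avoids_321_231 n (w \<circ> stransp k)" "fixes_below k w"
      by auto
    with j have "avoids_321_231 n w"
      by (intro avoids_321_231_of_comp_stransp[OF w(1)]) simp_all
    moreover have "fixes_below j w"
      using fixes_below_mono[OF k(4,1)] .
    ultimately show False
      using False by simp
  qed
  then show ?thesis
    using False by (simp only: card.empty if_False)
qed

lemma eval_unit_telescope:
  assumes "j \<le> n"
  shows "eval_unit j f = (\<Sum>k = j..<n. eval_unit k (divdiff k f)) + eval_unit n f"
  using sum_Suc_diff'[OF assms, of "\<lambda>k. - eval_unit k f"] by (simp add: eval_unit_divdiff)

lemma eval_unit_last_schubert: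
  assumes "w permutes {1..n}" "w \<noteq> id"
  shows "eval_unit n (schubert n w) = 0"
proof -
  have "eval_unit n (schubert n w) = lookup (schubert n w) 0"
    by (rule eval_unit_not_in_keys) (use keys_schubert[OF assms(1)] in fastforce)
  with lookup_schubert_0[OF assms] show ?thesis
    by simp
qed

text \<open>Telescoping \<open>S\<^sub>w(e\<^sub>j) = \<Sum>\<^sub>k\<^sub>\<ge>\<^sub>j (S\<^sub>w(e\<^sub>k) - S\<^sub>w(e\<^sub>k\<^sub>+\<^sub>1)) + S\<^sub>w(e\<^sub>n)\<close>, the \<open>k\<close>-th term is
  \<open>(\<partial>\<^sub>k S\<^sub>w)(e\<^sub>k)\<close>, which vanishes unless \<open>k\<close> is a descent, where it is \<open>S\<^sub>w\<^sub>s\<^sub>k(e\<^sub>k)\<close>,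
  and \<open>S\<^sub>w(e\<^sub>n)\<close> is the vanishing constant term.\<close>
theorem eval_unit_schubert:
  assumes n: "1 \<le> n" and w: "w permutes {1..n}" and j: "1 \<le> j" "j \<le> n"
  shows "eval_unit j (schubert n w) = (if avoids_321_231 n w \<and> fixes_below j w then 1 else 0)"
  using w j
proof (induction "perm_length n w" arbitrary: w j rule: less_induct)
  case less
  note w = less.prems(1) and j = less.prems(2,3)
  show ?case
  proof (cases "w = id")
    case True
    then show ?thesis
      using schubert_id[OF n] by (simp add: avoids_321_231_def fixes_below_def)
  next
    case False
    let ?P = "\<lambda>k. w (Suc k) < w k \<and> avoids_321_231 n (w \<circ> stransp k) \<and> fixes_below k w"
    have contribution: "eval_unit k (divdiff k (schubert n w)) = (if ?P k then 1 else 0)"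
      if "k \<in> {j..<n}" for k
    proof (cases "w k < w (Suc k)")
      case True
      with that j show ?thesis
        by (simp add: divdiff_schubert_ascent[OF w])
    next
      case False
      with permutes_apply_Suc_neq[OF w, of k] have descent: "w (Suc k) < w k"
        by simp
      from that j have k: "1 \<le> k" "k < n"
        by auto
      have "eval_unit k (schubert n (w \<circ> stransp k)) =
          (if avoids_321_231 n (w \<circ> stransp k) \<and> fixes_below k (w \<circ> stransp k) then 1 else 0)"
        using perm_length_descent[OF k descent] k
        by (intro less.hyps permutes_comp_stransp[OF w k]) simp_all
      with descent show ?thesis
        by (simp add: divdiff_schubert_descent[OF w k descent] fixes_below_comp_stransp)
    qed
    have "eval_unit j (schubert n w) = (\<Sum>k = j..<n. if ?P k then 1 else 0)"
      using eval_unit_telescope[OF j(2)] eval_unit_last_schubert[OF w False] contribution by simp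
    also have "\<dots> = int (card {k\<in>{j..<n}. ?P k})"
      by (simp add: sum.inter_filter[symmetric])
    also have "\<dots> = (if avoids_321_231 n w \<and> fixes_below j w then 1 else 0)"
      using card_contributing_descents[OF w False j(1)] by simp
    finally show ?thesis .
  qed
qed

lemma eval_unit_1_chm: "eval_unit 1 (chm a) = 1"
  unfolding chm_def eval_mpoly_prod by (rule prod.neutral) (intro ballI eval_unit_1_hcomp, simp)

theorem theorem3:
  fixes n :: nat and w :: "nat \<Rightarrow> nat"
  assumes "n \<ge> 1" and "w permutes {1..n}"
  shows "(\<exists>a. schubert n w = chm a) \<longleftrightarrow>
         (\<not> contains_pattern n w [3,2,1] \<and> \<not> contains_pattern n w [2,3,1])"
  unfolding avoids_321_231_iff_not_contains[OF assms(2), symmetric]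
proof
  assume "\<exists>a. schubert n w = chm a"
  then have "eval_unit 1 (schubert n w) = 1"
    using eval_unit_1_chm by auto
  moreover have "eval_unit 1 (schubert n w) = (if avoids_321_231 n w \<and> fixes_below 1 w then 1 else 0)"
    using assms by (intro eval_unit_schubert) auto
  ultimately show "avoids_321_231 n w"
    by (simp split: if_splits)
next
  assume "avoids_321_231 n w"
  with assms have "schubert n w = hcomp_prod n (lehmer_code n w)"
    by (intro schubert_eq_hcomp_prod_lehmer_code)
  then have "schubert n w = chm (map (lehmer_code n w) [1..<n])"
    by (simp only: chm_eq_hcomp_prod)
  then show "\<exists>a. schubert n w = chm a" ..
qed

end
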